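(* Let $\mathcal{H}_A,\mathcal{H}_B$ be complex Hilbert spaces of finite dimensions $d_A,d_B$, and put $d=\min\{d_A,d_B\}$, $D=\max\{d_A,d_B\}$. Assume $D\le d^3$ and let $h$ be an integer with $1<h\le d^2$. Then for every separable state $\rho$ on $\mathcal{H}_A\otimes\mathcal{H}_B$ that is in Filter Normal Form, $$\mathcal{M}_{h,p=1}(\rho)\le S_h(\alpha,\beta,\ldots,\beta),$$ where $S_h$ is the $h$-th elementary symmetric polynomial in $d^2$ variables, the argument consists of $\alpha$ once and $\beta$ repeated $d^2-1$ times, and $$\alpha=\frac{1}{\sqrt{Dd}},\qquad \beta=\sqrt{\frac{D-1}{D(d^2-1)}\cdot\frac{d-1}{d(d^2-1)}}.$$
   Context: Let $\{A_i\}_{i=1}^{d_A^2}$ be an orthonormal basis of the real vector space of $d_A\times d_A$ Hermitian matrices with respect to the Hilbert–Schmidt inner product $\langle X,Y\rangle=\mathrm{tr}(XY)$, and $\{B_j\}_{j=1}^{d_B^2}$ likewise for $d_B\times d_B$ Hermitian matrices. For a state (density matrix) $\rho$ on $\mathcal{H}_A\otimes\mathcal{H}_B$, its correlation matrix is the real $d_A^2\times d_B^2$ matrix $\mathcal{C}_{ij}=\mathrm{tr}(\rho\, A_i\otimes B_j)$; let $\sigma_1\ge\cdots\ge\sigma_{d^2}\ge0$ be its singular values (these do not depend on the choice of the orthonormal bases). For $1\le h\le d^2$ and $p\in[1,\infty)$ the Correlation Minor Norm is $$\mathcal{M}_{h,p}(\rho)=\Big(\sum_{R\subseteq\{1,\ldots,d^2\},\,|R|=h}\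 \prod_{k\in R}\sigma_k^p\Big)^{1/p},$$ equivalently the Schatten $p$-norm of the $h$-th compound matrix of $\mathcal{C}$. In particular $\mathcal{M}_{h,1}=S_h(\sigma_1,\ldots,\sigma_{d^2})$, where $S_h(x_1,\ldots,x_n)=\sum_{|R|=h}\prod_{k\in R}x_k$. A state is separable if it is a convex combination of product states $\rho_A\otimes\rho_B$. A state $\rho$ is in Filter Normal Form (FNF) if $\mathrm{tr}(\rho\,(A\otimes\mathbb{1}))=0$ for every traceless Hermitian $A$ on $\mathcal{H}_A$ and $\mathrm{tr}(\rho\,(\mathbb{1}\otimes B))=0$ for every traceless Hermitian $B$ on $\mathcal{H}_B$. *)

theory Defs
  imports "Jordan_Normal_Form.Matrix" Complex_Main
begin

(* Complex n x n matrices are Jordan_Normal_Form matrices of type complex mat;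
   the Hilbert spaces H_A, H_B are C^{dA}, C^{dB}, and H_A \<otimes> H_B is C^{dA*dB}
   with the standard (lexicographic) index identification (i,k) \<mapsto> i*dB + k. *)

definition mtrace :: "'a::comm_ring_1 mat \<Rightarrow> 'a" where
  "mtrace M = (\<Sum>i<dim_row M. M $$ (i,i))"

definition kron :: "'a::times mat \<Rightarrow> 'a mat \<Rightarrow> 'a mat" where
  "kron M N = mat (dim_row M * dim_row N) (dim_col M * dim_col N)
     (\<lambda>(i,j). M $$ (i div dim_row N, j div dim_col N) * N $$ (i mod dim_row N, j mod dim_col N))"

definition hermitian_mat :: "nat \<Rightarrow> complex mat \<Rightarrow> bool" where
  "hermitian_mat n M \<longleftrightarrow> M \<in> carrier_mat n n \<and>
     (\<forall>i<n. \<forall>j<n. M $$ (i,j) = cnj (M $$ (j,i)))"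

definition psd_mat :: "nat \<Rightarrow> complex mat \<Rightarrow> bool" where
  "psd_mat n M \<longleftrightarrow> hermitian_mat n M \<and>
     (\<forall>v. Re (\<Sum>i<n. \<Sum>j<n. cnj (v i) * M $$ (i,j) * v j) \<ge> 0)"

definition state :: "nat \<Rightarrow> complex mat \<Rightarrow> bool" where
  "state n \<rho> \<longleftrightarrow> psd_mat n \<rho> \<and> mtrace \<rho> = 1"

definition separable :: "nat \<Rightarrow> nat \<Rightarrow> complex mat \<Rightarrow> bool" where
  "separable dA dB \<rho> \<longleftrightarrow> (\<exists>m (p :: nat \<Rightarrow> real) \<rho>A \<rho>B.
     (\<forall>k<m. p k \<ge> 0 \<and> state dA (\<rho>A k) \<and> state dB (\<rho>B k)) \<and>
     (\<Sum>k<m. p k) = 1 \<and>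
     \<rho> = mat (dA*dB) (dA*dB) (\<lambda>ij. \<Sum>k<m. complex_of_real (p k) * kron (\<rho>A k) (\<rho>B k) $$ ij))"

definition FNF :: "nat \<Rightarrow> nat \<Rightarrow> complex mat \<Rightarrow> bool" where
  "FNF dA dB \<rho> \<longleftrightarrow>
     (\<forall>A. hermitian_mat dA A \<and> mtrace A = 0 \<longrightarrow> mtrace (\<rho> * kron A (1\<^sub>m dB)) = 0) \<and>
     (\<forall>B. hermitian_mat dB B \<and> mtrace B = 0 \<longrightarrow> mtrace (\<rho> * kron (1\<^sub>m dA) B) = 0)"

(* orthonormal basis (w.r.t. <X,Y> = tr(XY)) of the real vector space of n x n Hermitian
   matrices, given as a list of n^2 matrices; spanning follows from the dimension count *)
definition herm_onb :: "nat \<Rightarrow> complex mat list \<Rightarrow> bool" where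
  "herm_onb n As \<longleftrightarrow> length As = n^2 \<and> (\<forall>i<n^2. hermitian_mat n (As ! i)) \<and>
     (\<forall>i<n^2. \<forall>j<n^2. mtrace (As ! i * As ! j) = (if i = j then 1 else 0))"

(* correlation matrix C_ij = tr(\<rho> (A_i \<otimes> B_j)), real since all factors are Hermitian *)
definition corr_mat :: "complex mat \<Rightarrow> complex mat list \<Rightarrow> complex mat list \<Rightarrow> real mat" where
  "corr_mat \<rho> As Bs = mat (length As) (length Bs)
     (\<lambda>(i,j). Re (mtrace (\<rho> * kron (As ! i) (Bs ! j))))"

definition real_orthogonal :: "nat \<Rightarrow> real mat \<Rightarrow> bool" where
  "real_orthogonal n U \<longleftrightarrow> U \<in> carrier_mat n n \<and> transpose_mat U * U = 1\<^sub>m n"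

definition singular_values :: "real mat \<Rightarrow> real list \<Rightarrow> bool" where
  "singular_values C \<sigma> \<longleftrightarrow>
     length \<sigma> = min (dim_row C) (dim_col C) \<and> (\<forall>k<length \<sigma>. \<sigma> ! k \<ge> 0) \<and>
     sorted_wrt (\<ge>) \<sigma> \<and>
     (\<exists>U V. real_orthogonal (dim_row C) U \<and> real_orthogonal (dim_col C) V \<and>
        C = U * mat (dim_row C) (dim_col C) (\<lambda>(i,j). if i = j then \<sigma> ! i else 0) * transpose_mat V)"

definition esym :: "nat \<Rightarrow> real list \<Rightarrow> real" where
  "esym h xs = (\<Sum>R\<in>{R. R \<subseteq> {..<length xs} \<and> card R = h}. \<Prod>k\<in>R. xs ! k)"

definition CMN :: "nat \<Rightarrow> real \<Rightarrow> real list \<Rightarrow> real" where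
  "CMN h p \<sigma> = (\<Sum>R\<in>{R. R \<subseteq> {..<length \<sigma>} \<and> card R = h}. \<Prod>k\<in>R. (\<sigma> ! k) powr p) powr (1/p)"

end

theory Submission
  imports Defs "Jordan_Normal_Form.Determinant" "HOL-Analysis.L2_Norm"
begin

(* Write rho = sum_k p_k rhoA_k (x) rhoB_k. In the orthonormal bases the correlation matrix is
   C = sum_k p_k a_k b_k^T, where a_k and b_k are the coordinate vectors of rhoA_k and rhoB_k.
   The filter normal form says that the p-weighted means of the a_k and b_k are the coordinate
   vectors e and f of the maximally mixed states, so C = e f^T + sum_k p_k (a_k - e) (b_k - f)^T.
   Parseval's identity and purity tr rhoA_k^2 <= 1 give |e|^2 = 1/dA, |a_k - e|^2 <= 1 - 1/dA and
   a_k - e orthogonal to e, and likewise on the B side. Hence the sum of the singular values of C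
   is at most 1/sqrt(dA dB) + sqrt((1 - 1/dA) (1 - 1/dB)) = alpha + (d^2 - 1) beta, while
   e^T C f = |e|^2 |f|^2 forces sigma_1 >= alpha.
   Finally, among nonnegative vectors with first entry at least alpha >= beta and total at most
   alpha + (d^2 - 1) beta, S_h is largest at (alpha, beta, ..., beta): by Maclaurin's inequality the
   remaining entries may be replaced by their mean, and the resulting function of the first entry
   decreases beyond the mean. The hypothesis D <= d^3 is what makes beta <= alpha. *)

section \<open>Elementary symmetric functions\<close>

definition esym_on :: "nat \<Rightarrow> 'a set \<Rightarrow> ('a \<Rightarrow> 'b::comm_semiring_1) \<Rightarrow> 'b" where
  "esym_on h I f = (\<Sum>R\<in>{R. R \<subseteq> I \<and> card R = h}. \<Prod>k\<in>R. f k)"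

lemma esym_on_0: "finite I \<Longrightarrow> esym_on 0 I f = 1"
proof -
  assume "finite I"
  then have "{R. R \<subseteq> I \<and> card R = 0} = {{}}"
    using finite_subset by fastforce
  then show ?thesis
    unfolding esym_on_def by simp
qed

lemma esym_on_empty_Suc: "esym_on (Suc h) {} f = 0"
proof -
  have no_subsets: "{R. R \<subseteq> {} \<and> card R = Suc h} = {}"
    by auto
  show ?thesis
    unfolding esym_on_def no_subsets by simp
qed

lemma esym_on_image:
  assumes "inj_on g I"
  shows "esym_on h (g ` I) f = esym_on h I (f \<circ> g)"
proof -
  have inj_image: "inj_on (image g) {R. R \<subseteq> I \<and> card R = h}"
    using assms by (auto intro!: inj_onI dest: inj_on_image_eq_iff)
  have "{R. R \<subseteq> g ` I \<and> card R = h} = image g ` {R. R \<subseteq> I \<and> card R = h}"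
  proof (intro equalityI subsetI)
    fix R assume "R \<in> {R. R \<subseteq> g ` I \<and> card R = h}"
    then obtain S where "S \<subseteq> I" "R = g ` S"
      by (auto simp: subset_image_iff)
    moreover have "card (g ` S) = card S"
      using \<open>S \<subseteq> I\<close> assms by (intro card_image) (rule inj_on_subset)
    ultimately show "R \<in> image g ` {R. R \<subseteq> I \<and> card R = h}"
      using \<open>R \<in> _\<close> by auto
  next
    fix R assume "R \<in> image g ` {R. R \<subseteq> I \<and> card R = h}"
    then show "R \<in> {R. R \<subseteq> g ` I \<and> card R = h}"
      using assms by (auto simp: card_image inj_on_subset)
  qed
  then have "esym_on h (g ` I) f = (\<Sum>S\<in>{R. R \<subseteq> I \<and> card R = h}. \<Prod>k\<in>g ` S. f k)"
    unfolding esym_on_def by (simp add: sum.reindex[OF inj_image])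
  also have "\<dots> = esym_on h I (f \<circ> g)"
    unfolding esym_on_def using assms
    by (intro sum.cong refl) (simp add: prod.reindex inj_on_subset[OF assms])
  finally show ?thesis .
qed

lemma subsets_insert_card_Suc:
  assumes "finite I" "a \<notin> I"
  shows "{R. R \<subseteq> insert a I \<and> card R = Suc h}
           = insert a ` {R. R \<subseteq> I \<and> card R = h} \<union> {R. R \<subseteq> I \<and> card R = Suc h}"
proof (intro equalityI subsetI)
  fix R assume R: "R \<in> {R. R \<subseteq> insert a I \<and> card R = Suc h}"
  show "R \<in> insert a ` {R. R \<subseteq> I \<and> card R = h} \<union> {R. R \<subseteq> I \<and> card R = Suc h}"
  proof (cases "a \<in> R")
    case True
    then have "R = insert a (R - {a})" "R - {a} \<in> {R. R \<subseteq> I \<and> card R = h}"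
      using R card_Diff_singleton[of a R] by (auto dest: card_ge_0_finite)
    then show ?thesis by blast
  qed (use R in auto)
next
  fix R assume "R \<in> insert a ` {R. R \<subseteq> I \<and> card R = h} \<union> {R. R \<subseteq> I \<and> card R = Suc h}"
  then show "R \<in> {R. R \<subseteq> insert a I \<and> card R = Suc h}"
  proof
    assume "R \<in> insert a ` {R. R \<subseteq> I \<and> card R = h}"
    then obtain S where "R = insert a S" "S \<subseteq> I" "card S = h"
      by auto
    moreover have "finite S" "a \<notin> S"
      using \<open>S \<subseteq> I\<close> assms finite_subset by auto
    ultimately show ?thesis
      by auto
  qed auto
qed

lemma esym_on_insert:
  assumes "finite I" "a \<notin> I"
  shows "esym_on (Suc h) (insert a I) f = f a * esym_on h I f + esym_on (Suc h) I f"
proof -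
  let ?P = "\<lambda>h. {R. R \<subseteq> I \<and> card R = h}"
  have inj: "inj_on (insert a) (?P h)"
    using assms(2) by (intro inj_onI) (metis insert_ident mem_Collect_eq subset_iff)
  have "esym_on (Suc h) (insert a I) f
      = (\<Sum>R\<in>insert a ` ?P h. \<Prod>k\<in>R. f k) + (\<Sum>R\<in>?P (Suc h). \<Prod>k\<in>R. f k)"
    unfolding esym_on_def subsets_insert_card_Suc[OF assms] using assms
    by (intro sum.union_disjoint) auto
  also have "(\<Sum>R\<in>insert a ` ?P h. \<Prod>k\<in>R. f k) = (\<Sum>R\<in>?P h. f a * (\<Prod>k\<in>R. f k))"
    unfolding sum.reindex[OF inj] comp_def
  proof (intro sum.cong refl)
    fix R assume "R \<in> ?P h"
    then have "finite R" "a \<notin> R"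
      using assms finite_subset by auto
    then show "(\<Prod>k\<in>insert a R. f k) = f a * (\<Prod>k\<in>R. f k)"
      by simp
  qed
  finally show ?thesis
    unfolding esym_on_def by (simp add: sum_distrib_left)
qed

lemma esym_eq_esym_on: "esym h xs = esym_on h {..<length xs} ((!) xs)"
  unfolding esym_def esym_on_def ..

lemma esym_0 [simp]: "esym 0 xs = 1"
  by (simp add: esym_eq_esym_on esym_on_0)

lemma esym_Nil: "esym h [] = (if h = 0 then 1 else 0)"
  by (cases h) (simp_all add: esym_eq_esym_on esym_on_0 esym_on_empty_Suc)

lemma esym_Cons_Suc: "esym (Suc h) (x # xs) = x * esym h xs + esym (Suc h) xs"
proof -
  have "{..<length (x # xs)} = insert 0 (Suc ` {..<length xs})"
    by (auto simp: lessThan_Suc_eq_insert_0)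
  then show ?thesis
    by (simp add: esym_eq_esym_on esym_on_insert esym_on_image comp_def)
qed

lemma esym_replicate: "esym h (replicate n c) = real (n choose h) * c ^ h"
proof (induction n arbitrary: h)
  case (Suc n)
  then show ?case
    by (cases h) (simp_all add: esym_Cons_Suc algebra_simps)
qed (simp add: esym_Nil)

(* S_h after Maclaurin's inequality has replaced the k entries following x by their mean. *)
definition esym_mean_tail :: "nat \<Rightarrow> nat \<Rightarrow> real \<Rightarrow> real \<Rightarrow> real" where
  "esym_mean_tail h k s x = esym h (x # replicate k ((s - x) / k))"

lemma esym_mean_tail_Suc:
  "esym_mean_tail (Suc j) k s x
     = x * real (k choose j) * ((s - x) / k) ^ j + real (k choose Suc j) * ((s - x) / k) ^ Suc j"
  unfolding esym_mean_tail_def by (simp add: esym_Cons_Suc esym_replicate)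

lemma esym_mean_tail_0: "esym_mean_tail 0 k s x = 1"
  by (simp add: esym_mean_tail_def)

lemma esym_mean_tail_Suc_0: "k \<ge> 1 \<Longrightarrow> esym_mean_tail (Suc 0) k s x = s"
  by (simp add: esym_mean_tail_Suc)

lemma esym_mean_tail_deriv:
  fixes s x :: real
  assumes "k \<ge> 1"
  defines "m \<equiv> (s - x) / k"
  shows "(esym_mean_tail (Suc (Suc j)) k s has_real_derivative
           real (k choose Suc j) * (real (Suc j) / k) * m ^ j * (m - x)) (at x)"
proof -
  define C1 C2 where "C1 = real (k choose Suc j)" and "C2 = real (k choose Suc (Suc j))"
  have absorb: "C2 * Suc (Suc j) = C1 * (real k - Suc j)"
    unfolding C1_def C2_def using gbinomial_mult_1'[of "real k" "Suc j"]
    by (simp add: binomial_gbinomial algebra_simps)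
  have f_eq: "esym_mean_tail (Suc (Suc j)) k s
      = (\<lambda>x. C1 * (x * ((s - x) / k) ^ Suc j) + C2 * ((s - x) / k) ^ Suc (Suc j))"
    unfolding C1_def C2_def by (rule ext) (simp add: esym_mean_tail_Suc algebra_simps)
  have "((\<lambda>x. (s - x) / k) has_real_derivative - 1 / k) (at x)"
    using assms(1) by (auto intro!: derivative_eq_intros)
  then have deriv: "((\<lambda>x. C1 * (x * ((s - x) / k) ^ Suc j) + C2 * ((s - x) / k) ^ Suc (Suc j))
      has_real_derivative C1 * (x * (real (Suc j) * (- 1 / k * m ^ (Suc j - Suc 0))) + 1 * m ^ Suc j)
        + C2 * (real (Suc (Suc j)) * (- 1 / k * m ^ (Suc (Suc j) - Suc 0)))) (at x)"
    unfolding m_def by (intro DERIV_add DERIV_cmult DERIV_mult' DERIV_ident DERIV_power)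
  have "C1 * (x * (real (Suc j) * (- 1 / k * m ^ (Suc j - Suc 0))) + 1 * m ^ Suc j)
        + C2 * (real (Suc (Suc j)) * (- 1 / k * m ^ (Suc (Suc j) - Suc 0)))
      = C1 * (m ^ Suc j - x * real (Suc j) * m ^ j / k) - C2 * Suc (Suc j) * m ^ Suc j / k"
    by (simp add: algebra_simps)
  also have "\<dots> = C1 * (real (Suc j) / k) * m ^ j * (m - x)"
    unfolding absorb using assms(1) by (simp add: field_simps)
  finally show ?thesis
    using deriv unfolding f_eq C1_def by simp
qed

lemma esym_mean_tail_deriv_sign:
  fixes s x :: real
  assumes "k \<ge> 1" "x \<le> s"
  obtains D where "0 \<le> D" "(esym_mean_tail h k s has_real_derivative D * ((s - x) / k - x)) (at x)"
proof -
  consider "h = 0" | "h = Suc 0" | j where "h = Suc (Suc j)"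
    by (metis not0_implies_Suc)
  then show thesis
  proof cases
    case 1
    then have "esym_mean_tail h k s = (\<lambda>_. 1)"
      by (simp add: esym_mean_tail_0 fun_eq_iff)
    then show thesis
      using that[of 0] by simp
  next
    case 2
    then have "esym_mean_tail h k s = (\<lambda>_. s)"
      using assms(1) by (simp add: esym_mean_tail_Suc_0 fun_eq_iff)
    then show thesis
      using that[of 0] by simp
  next
    case (3 j)
    have "0 \<le> real (k choose Suc j) * (real (Suc j) / k) * ((s - x) / k) ^ j"
      using assms by simp
    then show thesis
      using that esym_mean_tail_deriv[OF assms(1), where s = s and x = x and j = j] unfolding 3 by blast
  qed
qed

lemma esym_mean_tail_mono:
  fixes s x y :: real
  assumes "k \<ge> 1" "0 \<le> s" "x \<le> y" "(real k + 1) * y \<le> s"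
  shows "esym_mean_tail h k s x \<le> esym_mean_tail h k s y"
proof (rule DERIV_nonneg_imp_nondecreasing[OF assms(3)])
  fix z assume z: "x \<le> z" "z \<le> y"
  have "(real k + 1) * z \<le> (real k + 1) * y"
    using z(2) by (intro mult_left_mono) auto
  then have kz: "(real k + 1) * z \<le> s"
    using assms(4) by linarith
  then have "z \<le> (s - z) / k"
    using assms(1) by (simp add: field_simps)
  have "z \<le> s"
  proof (cases "z \<le> 0")
    case False
    then have "z \<le> (real k + 1) * z"
      by (simp add: algebra_simps)
    then show ?thesis
      using kz by linarith
  qed (use assms(2) in linarith)
  then obtain D where "0 \<le> D" "(esym_mean_tail h k s has_real_derivative D * ((s - z) / k - z)) (at z)"
    using esym_mean_tail_deriv_sign[OF assms(1)] by blast
  then show "\<exists>D. (esym_mean_tail h k s has_real_derivative D) (at z) \<and> 0 \<le> D"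
    using \<open>z \<le> (s - z) / k\<close> by auto
qed

lemma esym_mean_tail_antimono:
  fixes s x y :: real
  assumes "k \<ge> 1" "s \<le> (real k + 1) * x" "x \<le> y" "y \<le> s"
  shows "esym_mean_tail h k s y \<le> esym_mean_tail h k s x"
proof (rule DERIV_nonpos_imp_nonincreasing[OF assms(3)])
  fix z assume z: "x \<le> z" "z \<le> y"
  have "(real k + 1) * x \<le> (real k + 1) * z"
    using z(1) by (intro mult_left_mono) auto
  then have "(s - z) / k \<le> z"
    using assms(1,2) by (simp add: field_simps)
  have "z \<le> s"
    using z(2) assms(4) by linarith
  then obtain D where D: "0 \<le> D" "(esym_mean_tail h k s has_real_derivative D * ((s - z) / k - z)) (at z)"
    using esym_mean_tail_deriv_sign[OF assms(1)] by blast
  have "D * ((s - z) / k - z) \<le> 0"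
    using D(1) \<open>(s - z) / k \<le> z\<close> by (intro mult_nonneg_nonpos) auto
  then show "\<exists>D. (esym_mean_tail h k s has_real_derivative D) (at z) \<and> D \<le> 0"
    using D(2) by blast
qed

lemma esym_mean_tail_le_mean:
  fixes s x :: real
  assumes "k \<ge> 1" "0 \<le> s" "x \<le> s"
  shows "esym_mean_tail h k s x \<le> esym h (replicate (Suc k) (s / (real k + 1)))"
proof -
  define t where "t = s / (real k + 1)"
  have st: "(real k + 1) * t = s"
    unfolding t_def by simp
  have "esym_mean_tail h k s x \<le> esym_mean_tail h k s t"
  proof (cases "x \<le> t")
    case True
    then show ?thesis
      using assms st by (intro esym_mean_tail_mono) auto
  next
    case False
    then show ?thesis
      using assms st by (intro esym_mean_tail_antimono) auto
  qed
  moreover have "(s - t) / k = t"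
    using assms(1) st by (simp add: field_simps)
  ultimately show ?thesis
    unfolding esym_mean_tail_def t_def by simp
qed

lemma esym_Cons_le_esym_mean_tail:
  fixes ys :: "real list"
  assumes "0 \<le> x" "\<And>i. esym i ys \<le> esym i (replicate (length ys) ((s - x) / length ys))"
  shows "esym h (x # ys) \<le> esym_mean_tail h (length ys) s x"
proof (cases h)
  case (Suc j)
  then show ?thesis
    unfolding esym_mean_tail_def esym_Cons_Suc Suc
    using assms by (intro add_mono mult_left_mono) auto
qed (simp add: esym_mean_tail_0)

theorem esym_le_esym_replicate_mean:
  fixes ys :: "real list" and t :: real
  assumes "\<forall>y\<in>set ys. 0 \<le> y" "sum_list ys \<le> length ys * t"
  shows "esym h ys \<le> esym h (replicate (length ys) t)"
  using assms
proof (induction ys arbitrary: h t)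
  case (Cons y ys)
  show ?case
  proof (cases "ys = []")
    case True
    then show ?thesis
      using Cons.prems by (cases h) (auto simp: esym_Cons_Suc esym_Nil)
  next
    case False
    define k s where "k = length ys" and "s = (real k + 1) * t"
    have k: "k \<ge> 1"
      using False unfolding k_def by (simp add: Suc_le_eq)
    have y: "0 \<le> y" "y \<le> s" and tail: "\<forall>y\<in>set ys. 0 \<le> y"
      using Cons.prems sum_list_nonneg[of ys] unfolding s_def k_def by (auto simp: algebra_simps)
    have "real k * ((s - y) / k) = s - y"
      using k by simp
    then have "sum_list ys \<le> k * ((s - y) / k)"
      using Cons.prems(2) unfolding s_def k_def by (simp add: algebra_simps)
    then have "esym h (y # ys) \<le> esym_mean_tail h k s y"
      using Cons.IH tail y(1) unfolding k_def by (intro esym_Cons_le_esym_mean_tail) blast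
    also have "\<dots> \<le> esym h (replicate (Suc k) t)"
      using esym_mean_tail_le_mean[OF k _ y(2)] y unfolding s_def by simp
    finally show ?thesis
      unfolding k_def by simp
  qed
qed simp

lemma esym_Cons_le_esym_Cons_replicate:
  fixes ys :: "real list" and x \<alpha> \<beta> :: real
  assumes "\<forall>y\<in>set ys. 0 \<le> y" "\<alpha> \<le> x" "\<beta> \<le> \<alpha>" "0 \<le> \<beta>"
    and "x + sum_list ys \<le> \<alpha> + length ys * \<beta>"
  shows "esym h (x # ys) \<le> esym h (\<alpha> # replicate (length ys) \<beta>)"
proof (cases "ys = []")
  case True
  then have "x = \<alpha>"
    using assms(2,5) by simp
  then show ?thesis
    using True by simp
next
  case False
  define k s where "k = length ys" and "s = \<alpha> + k * \<beta>"
  have k: "k \<ge> 1"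
    using False unfolding k_def by (simp add: Suc_le_eq)
  have "real k * ((s - x) / k) = s - x"
    using k by simp
  then have "sum_list ys \<le> k * ((s - x) / k)"
    using assms(5) unfolding s_def k_def by (simp add: algebra_simps)
  then have "esym h (x # ys) \<le> esym_mean_tail h k s x"
    using esym_le_esym_replicate_mean[OF assms(1)] assms(2-4) unfolding k_def
    by (intro esym_Cons_le_esym_mean_tail) auto
  also have "\<dots> \<le> esym_mean_tail h k s \<alpha>"
  proof (rule esym_mean_tail_antimono[OF k])
    show "s \<le> (real k + 1) * \<alpha>"
      using assms(3) k unfolding s_def by (simp add: algebra_simps mult_left_mono)
    show "x \<le> s"
      using assms(1,5) sum_list_nonneg[of ys] unfolding s_def k_def by auto
  qed (rule assms(2))
  also have "\<dots> = esym h (\<alpha> # replicate k \<beta>)"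
    using k unfolding esym_mean_tail_def s_def by simp
  finally show ?thesis
    unfolding k_def .
qed

section \<open>Traces and Kronecker products\<close>

lemma mult_add_less_mult:
  assumes "i < a" "j < b"
  shows "i * b + j < a * (b::nat)"
proof -
  have "(i + 1) * b \<le> a * b"
    using assms(1) by (intro mult_right_mono) auto
  then show ?thesis
    using assms(2) by simp
qed

lemma sum_lessThan_mult:
  fixes a b :: nat
  shows "(\<Sum>i<a * b. g i) = (\<Sum>i<a. \<Sum>j<b. g (i * b + j))"
proof (cases "b = 0")
  case False
  have "(\<Sum>i<a. \<Sum>j<b. g (i * b + j)) = (\<Sum>(i, j)\<in>{..<a} \<times> {..<b}. g (i * b + j))"
    by (simp add: sum.cartesian_product)
  also have "\<dots> = (\<Sum>i<a * b. g i)"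
    by (rule sum.reindex_bij_witness[where i = "\<lambda>i. (i div b, i mod b)" and j = "\<lambda>(i, j). i * b + j"])
      (use False in \<open>auto simp: mult_add_less_mult less_mult_imp_div_less\<close>)
  finally show ?thesis ..
qed simp

lemma mtrace_mult:
  assumes "M \<in> carrier_mat n m" "K \<in> carrier_mat m n"
  shows "mtrace (M * K) = (\<Sum>i<n. \<Sum>j<m. M $$ (i,j) * K $$ (j,i))"
  using assms unfolding mtrace_def by (simp add: scalar_prod_def lessThan_atLeast0)

lemma mtrace_minus: "A \<in> carrier_mat n n \<Longrightarrow> B \<in> carrier_mat n n \<Longrightarrow> mtrace (A - B) = mtrace A - mtrace B"
  unfolding mtrace_def by (simp add: sum_subtractf)

lemma mtrace_smult: "A \<in> carrier_mat n n \<Longrightarrow> mtrace (c \<cdot>\<^sub>m A) = c * mtrace A"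
  unfolding mtrace_def by (simp add: sum_distrib_left)

lemma mtrace_one_mat: "mtrace (1\<^sub>m n) = of_nat n"
  unfolding mtrace_def by simp

lemma mtrace_mult_minus_smult_one:
  assumes "P \<in> carrier_mat n n" "X \<in> carrier_mat n n"
  shows "mtrace (P * (X - c \<cdot>\<^sub>m 1\<^sub>m n)) = mtrace (P * X) - c * mtrace P"
proof -
  have "P * (X - c \<cdot>\<^sub>m 1\<^sub>m n) = P * X - c \<cdot>\<^sub>m P"
    using assms by (simp add: mult_minus_distrib_mat mult_smult_distrib[OF assms(1) one_carrier_mat])
  then show ?thesis
    using assms by (simp add: mtrace_minus[OF mult_carrier_mat[OF assms] smult_carrier_mat[OF assms(1)]]
        mtrace_smult[OF assms(1)])
qed

lemma mtrace_mat_sum_mult: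
  fixes m :: nat
  assumes "\<And>k. k < m \<Longrightarrow> M k \<in> carrier_mat n n" "Z \<in> carrier_mat n n"
  shows "mtrace (mat n n (\<lambda>ij. \<Sum>k<m. c k * M k $$ ij) * Z) = (\<Sum>k<m. c k * mtrace (M k * Z))"
proof -
  have "mtrace (mat n n (\<lambda>ij. \<Sum>k<m. c k * M k $$ ij) * Z)
      = (\<Sum>i<n. \<Sum>j<n. \<Sum>k<m. c k * (M k $$ (i,j) * Z $$ (j,i)))"
    unfolding mtrace_mult[OF mat_carrier assms(2)]
    by (intro sum.cong refl) (simp add: sum_distrib_right mult.assoc)
  also have "\<dots> = (\<Sum>k<m. c k * (\<Sum>i<n. \<Sum>j<n. M k $$ (i,j) * Z $$ (j,i)))"
    by (simp add: sum_distrib_left sum.swap[where A = "{..<n}" and B = "{..<m}"])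
  also have "\<dots> = (\<Sum>k<m. c k * mtrace (M k * Z))"
    by (intro sum.cong refl) (simp add: mtrace_mult[OF assms])
  finally show ?thesis .
qed

lemma kron_carrier_mat:
  "M \<in> carrier_mat a c \<Longrightarrow> N \<in> carrier_mat b e \<Longrightarrow> kron M N \<in> carrier_mat (a * b) (c * e)"
  unfolding kron_def by simp

lemma index_kron:
  assumes "M \<in> carrier_mat a c" "N \<in> carrier_mat b e" "i < a" "k < b" "j < c" "l < e"
  shows "kron M N $$ (i * b + k, j * e + l) = M $$ (i, j) * N $$ (k, l)"
  using assms mult_add_less_mult[of i a k b] mult_add_less_mult[of j c l e]
  unfolding kron_def by simp

lemma mtrace_kron_mult:
  assumes "P \<in> carrier_mat a a" "X \<in> carrier_mat a a" "Q \<in> carrier_mat b b" "Y \<in> carrier_mat b b"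
  shows "mtrace (kron P Q * kron X Y) = mtrace (P * X) * mtrace (Q * Y)"
proof -
  have "mtrace (kron P Q * kron X Y)
      = (\<Sum>i<a. \<Sum>k<b. \<Sum>j<a. \<Sum>l<b. kron P Q $$ (i*b+k, j*b+l) * kron X Y $$ (j*b+l, i*b+k))"
    unfolding mtrace_mult[OF kron_carrier_mat[OF assms(1,3)] kron_carrier_mat[OF assms(2,4)]]
    by (simp only: sum_lessThan_mult)
  also have "\<dots> = (\<Sum>i<a. \<Sum>k<b. \<Sum>j<a. \<Sum>l<b. (P $$ (i,j) * X $$ (j,i)) * (Q $$ (k,l) * Y $$ (l,k)))"
    using assms by (intro sum.cong refl) (simp add: index_kron mult_ac)
  also have "\<dots> = mtrace (P * X) * mtrace (Q * Y)"
    using assms by (simp add: mtrace_mult sum_product sum.swap[where A = "{..<b}" and B = "{..<a}"])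
  finally show ?thesis .
qed

section \<open>Hermitian matrices and states\<close>

lemma hermitian_mat_carrier: "hermitian_mat n X \<Longrightarrow> X \<in> carrier_mat n n"
  unfolding hermitian_mat_def by simp

lemma hermitian_mat_cnj:
  assumes "hermitian_mat n X" "i < n" "j < n"
  shows "cnj (X $$ (i,j)) = X $$ (j,i)"
proof -
  have "X $$ (j,i) = cnj (X $$ (i,j))"
    using assms unfolding hermitian_mat_def by blast
  then show ?thesis
    by simp
qed

lemma hermitian_one_mat: "hermitian_mat n (1\<^sub>m n)"
  unfolding hermitian_mat_def by auto

lemma hermitian_mat_minus_smult_one:
  assumes "hermitian_mat n X" "Im c = 0"
  shows "hermitian_mat n (X - c \<cdot>\<^sub>m 1\<^sub>m n)"
proof -
  have "cnj c = c"
    using assms(2) by (simp add: complex_eq_iff)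
  show ?thesis
    unfolding hermitian_mat_def
  proof (intro conjI allI impI)
    fix i j assume "i < n" "j < n"
    then show "(X - c \<cdot>\<^sub>m 1\<^sub>m n) $$ (i,j) = cnj ((X - c \<cdot>\<^sub>m 1\<^sub>m n) $$ (j,i))"
      using hermitian_mat_cnj[OF assms(1), of j i] \<open>cnj c = c\<close> by simp
  qed (intro minus_carrier_mat smult_carrier_mat one_carrier_mat)
qed

lemma mtrace_mult_hermitian_real:
  assumes "hermitian_mat n X" "hermitian_mat n Y"
  shows "Im (mtrace (X * Y)) = 0"
proof -
  have carrier: "X \<in> carrier_mat n n" "Y \<in> carrier_mat n n"
    using assms by (auto simp: hermitian_mat_carrier)
  have "cnj (mtrace (X * Y)) = (\<Sum>i<n. \<Sum>j<n. X $$ (j,i) * Y $$ (i,j))"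
    unfolding mtrace_mult[OF carrier] using assms
    by (simp, intro sum.cong refl) (simp add: hermitian_mat_cnj)
  also have "\<dots> = mtrace (X * Y)"
    unfolding mtrace_mult[OF carrier] by (rule sum.swap)
  finally show ?thesis
    by (simp add: complex_eq_iff)
qed

lemma hermitian_mtrace_real:
  assumes "hermitian_mat n X"
  shows "mtrace X = complex_of_real (Re (mtrace X))"
proof -
  have "1\<^sub>m n * X = X"
    using hermitian_mat_carrier[OF assms] by (rule left_mult_one_mat)
  then show ?thesis
    using mtrace_mult_hermitian_real[OF hermitian_one_mat assms] by (simp add: complex_eq_iff)
qed

lemma psd_mat_hermitian: "psd_mat n P \<Longrightarrow> hermitian_mat n P"
  unfolding psd_mat_def by blast

lemma psd_mat_form: "psd_mat n P \<Longrightarrow> 0 \<le> Re (\<Sum>i<n. \<Sum>j<n. cnj (v i) * P $$ (i,j) * v j)"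
  unfolding psd_mat_def by blast

lemma psd_mat_two_point:
  assumes P: "psd_mat n P" and "i < n" "j < n" "i \<noteq> j"
  shows "0 \<le> Re (cnj c * (P $$ (i,i) * c + P $$ (i,j)) + (P $$ (j,i) * c + P $$ (j,j)))"
proof -
  define v where "v l = (if l = i then c else 0) + (if l = j then 1 else 0)" for l
  have row: "(\<Sum>b<n. f b * v b) = f i * c + f j" for f
    using assms(2-4) unfolding v_def
    by (simp add: distrib_left sum.distrib if_distrib[of "\<lambda>x. _ * x"] cong: if_cong)
  have cnj_v: "cnj (v a) = (if a = i then cnj c else 0) + (if a = j then 1 else 0)" for a
    by (simp add: v_def)
  have col: "(\<Sum>a<n. cnj (v a) * g a) = cnj c * g i + g j" for g
    using assms(2-4) unfolding cnj_v
    by (simp add: distrib_right sum.distrib if_distrib[of "\<lambda>x. x * _"] cong: if_cong)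
  have "(\<Sum>a<n. \<Sum>b<n. cnj (v a) * P $$ (a,b) * v b)
      = (\<Sum>a<n. cnj (v a) * (P $$ (a,i) * c + P $$ (a,j)))"
    by (simp add: mult.assoc row flip: sum_distrib_left)
  also have "\<dots> = cnj c * (P $$ (i,i) * c + P $$ (i,j)) + (P $$ (j,i) * c + P $$ (j,j))"
    by (rule col)
  finally have form: "(\<Sum>a<n. \<Sum>b<n. cnj (v a) * P $$ (a,b) * v b)
      = cnj c * (P $$ (i,i) * c + P $$ (i,j)) + (P $$ (j,i) * c + P $$ (j,j))" .
  show ?thesis
    using psd_mat_form[OF P, of v] unfolding form .
qed

lemma psd_mat_diag:
  assumes P: "psd_mat n P" and i: "i < n"
  shows "P $$ (i,i) = complex_of_real (Re (P $$ (i,i)))" and "0 \<le> Re (P $$ (i,i))"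
proof -
  have "cnj (P $$ (i,i)) = P $$ (i,i)"
    using hermitian_mat_cnj[OF psd_mat_hermitian[OF P] i i] .
  then show "P $$ (i,i) = complex_of_real (Re (P $$ (i,i)))"
    by (simp add: complex_eq_iff)
  define v where "v l = (if l = i then 1 else 0 :: complex)" for l
  have "cnj (v l) = v l" for l
    unfolding v_def by simp
  then have "(\<Sum>a<n. \<Sum>b<n. cnj (v a) * P $$ (a,b) * v b) = P $$ (i,i)"
    using i unfolding v_def by (simp add: if_distrib[of "\<lambda>x. x * _"] if_distrib[of "\<lambda>x. _ * x"] cong: if_cong)
  moreover have "0 \<le> Re (\<Sum>a<n. \<Sum>b<n. cnj (v a) * P $$ (a,b) * v b)"
    using P by (rule psd_mat_form)
  ultimately show "0 \<le> Re (P $$ (i,i))"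
    by simp
qed

lemma quadratic_nonneg_imp_le:
  fixes a b c :: real
  assumes quadratic: "\<And>t. 0 \<le> (a * t\<^sup>2 - 2 * t) * c + b" and "0 \<le> a" "0 \<le> b" "0 \<le> c"
  shows "c \<le> a * b"
proof (cases "a = 0")
  case True
  have "c = 0"
  proof (rule ccontr)
    assume "c \<noteq> 0"
    have "0 \<le> (a * ((b + 1) / c)\<^sup>2 - 2 * ((b + 1) / c)) * c + b"
      by (rule quadratic)
    also have "\<dots> = - b - 2"
      using True \<open>c \<noteq> 0\<close> by (simp add: field_simps)
    finally show False
      using assms(3) by simp
  qed
  then show ?thesis
    using assms by simp
next
  case False
  then have "0 < a"
    using assms(2) by simp
  have "0 \<le> (a * (1 / a)\<^sup>2 - 2 * (1 / a)) * c + b"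
    by (rule quadratic)
  also have "\<dots> = b - c / a"
    using \<open>0 < a\<close> by (simp add: field_simps power2_eq_square)
  finally show ?thesis
    using \<open>0 < a\<close> by (simp add: field_simps)
qed

lemma psd_mat_entry_bound:
  assumes P: "psd_mat n P" and i: "i < n" and j: "j < n"
  shows "(cmod (P $$ (i,j)))\<^sup>2 \<le> Re (P $$ (i,i)) * Re (P $$ (j,j))"
proof (cases "i = j")
  case True
  have "cmod (P $$ (i,i)) = \<bar>Re (P $$ (i,i))\<bar>"
    by (subst psd_mat_diag(1)[OF P i]) simp
  then show ?thesis
    using True by (simp add: power2_eq_square)
next
  case False
  define z a b where "z = P $$ (i,j)" and "a = Re (P $$ (i,i))" and "b = Re (P $$ (j,j))"
  have entries: "P $$ (i,i) = complex_of_real a" "P $$ (j,j) = complex_of_real b" "P $$ (j,i) = cnj z"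
    using psd_mat_diag(1)[OF P i] psd_mat_diag(1)[OF P j] hermitian_mat_cnj[OF psd_mat_hermitian[OF P] i j]
    unfolding a_def b_def z_def by simp_all
  have "0 \<le> (a * t\<^sup>2 - 2 * t) * (cmod z)\<^sup>2 + b" for t
  proof -
    define c where "c = - complex_of_real t * z"
    have "cnj c * (complex_of_real a * c + z) + (cnj z * c + complex_of_real b)
        = complex_of_real (a * t\<^sup>2 - 2 * t) * (z * cnj z) + complex_of_real b"
      unfolding c_def by (simp add: algebra_simps power2_eq_square)
    also have "\<dots> = complex_of_real ((a * t\<^sup>2 - 2 * t) * (cmod z)\<^sup>2 + b)"
      by (simp flip: complex_norm_square)
    finally have form: "cnj c * (complex_of_real a * c + z) + (cnj z * c + complex_of_real b)
        = complex_of_real ((a * t\<^sup>2 - 2 * t) * (cmod z)\<^sup>2 + b)" .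
    show ?thesis
      using psd_mat_two_point[OF P i j False, of c] unfolding entries z_def[symmetric] form
      by (simp only: Re_complex_of_real)
  qed
  moreover have "0 \<le> a" "0 \<le> b"
    using psd_mat_diag(2) P i j unfolding a_def b_def by auto
  ultimately have "(cmod z)\<^sup>2 \<le> a * b"
    by (intro quadratic_nonneg_imp_le) auto
  then show ?thesis
    unfolding z_def a_def b_def .
qed

lemma state_carrier: "state n P \<Longrightarrow> P \<in> carrier_mat n n"
  unfolding state_def psd_mat_def hermitian_mat_def by blast

lemma state_hermitian: "state n P \<Longrightarrow> hermitian_mat n P"
  unfolding state_def psd_mat_def by blast

lemma state_mtrace: "state n P \<Longrightarrow> mtrace P = 1"
  unfolding state_def by blast

lemma state_mtrace_mult_one:
  assumes "state n P"
  shows "mtrace (P * 1\<^sub>m n) = 1"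
  using right_mult_one_mat[OF state_carrier[OF assms]] state_mtrace[OF assms] by simp

lemma state_purity:
  assumes "state n P"
  shows "Re (mtrace (P * P)) \<le> 1"
proof -
  have P: "psd_mat n P" and tr: "mtrace P = 1"
    using assms unfolding state_def by auto
  have H: "hermitian_mat n P"
    using P by (rule psd_mat_hermitian)
  have carrier: "P \<in> carrier_mat n n"
    using H by (rule hermitian_mat_carrier)
  have "Re (mtrace (P * P)) = (\<Sum>i<n. \<Sum>j<n. (cmod (P $$ (i,j)))\<^sup>2)"
    unfolding mtrace_mult[OF carrier carrier] Re_sum
  proof (intro sum.cong refl)
    fix i j assume "i \<in> {..<n}" "j \<in> {..<n}"
    then have "P $$ (j,i) = cnj (P $$ (i,j))"
      using hermitian_mat_cnj[OF H] by simp
    then show "Re (P $$ (i,j) * P $$ (j,i)) = (cmod (P $$ (i,j)))\<^sup>2"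
      by (simp add: cmod_def power2_eq_square)
  qed
  also have "\<dots> \<le> (\<Sum>i<n. \<Sum>j<n. Re (P $$ (i,i)) * Re (P $$ (j,j)))"
    using psd_mat_entry_bound[OF P] by (intro sum_mono) auto
  also have "\<dots> = (Re (mtrace P))\<^sup>2"
    unfolding mtrace_def using carrier by (simp add: power2_eq_square sum_product)
  finally show ?thesis
    using tr by simp
qed

lemma hermitian_traceless_part:
  assumes "hermitian_mat n X" "0 < n"
  defines "X0 \<equiv> X - complex_of_real (Re (mtrace X) / n) \<cdot>\<^sub>m 1\<^sub>m n"
  shows "hermitian_mat n X0" and "mtrace X0 = 0"
    and "\<And>P. state n P \<Longrightarrow> mtrace (P * X0) = mtrace (P * X) - complex_of_real (Re (mtrace X) / n)"
proof -
  have carrier: "X \<in> carrier_mat n n"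
    using assms(1) by (rule hermitian_mat_carrier)
  show "hermitian_mat n X0"
    unfolding X0_def using assms(1) by (rule hermitian_mat_minus_smult_one) simp
  show "mtrace X0 = 0"
    unfolding X0_def using assms(2) hermitian_mtrace_real[OF assms(1)] carrier
    by (simp add: mtrace_minus mtrace_smult[OF one_carrier_mat] mtrace_one_mat)
  show "mtrace (P * X0) = mtrace (P * X) - complex_of_real (Re (mtrace X) / n)" if "state n P" for P
    unfolding X0_def using that carrier
    by (simp add: mtrace_mult_minus_smult_one state_carrier state_mtrace)
qed

section \<open>Coordinates in a Hermitian orthonormal basis\<close>

lemma mtrace_mult_hermitian_vec:
  assumes "Z \<in> carrier_mat n n" "hermitian_mat n A"
  shows "mtrace (Z * A) = (\<Sum>r<n * n. Z $$ (r div n, r mod n) * cnj (A $$ (r div n, r mod n)))"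
proof -
  have "mtrace (Z * A) = (\<Sum>p<n. \<Sum>q<n. Z $$ (p,q) * cnj (A $$ (p,q)))"
    unfolding mtrace_mult[OF assms(1) hermitian_mat_carrier[OF assms(2)]]
    by (intro sum.cong refl) (simp add: hermitian_mat_cnj[OF assms(2)])
  also have "\<dots> = (\<Sum>r<n * n. Z $$ (r div n, r mod n) * cnj (A $$ (r div n, r mod n)))"
    unfolding sum_lessThan_mult by (intro sum.cong refl) simp
  finally show ?thesis .
qed

lemma herm_onb_hermitian: "herm_onb n As \<Longrightarrow> i < n\<^sup>2 \<Longrightarrow> hermitian_mat n (As ! i)"
  unfolding herm_onb_def by blast

lemma herm_onb_orthonormal:
  "herm_onb n As \<Longrightarrow> i < n\<^sup>2 \<Longrightarrow> j < n\<^sup>2 \<Longrightarrow> mtrace (As ! i * As ! j) = (if i = j then 1 else 0)"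
  unfolding herm_onb_def by blast

lemma herm_onb_completeness:
  assumes onb: "herm_onb n As" and "r < n * n" "s < n * n"
  shows "(\<Sum>i<n\<^sup>2. As ! i $$ (r div n, r mod n) * cnj (As ! i $$ (s div n, s mod n)))
           = (if r = s then 1 else 0)"
proof -
  (* The columns of W are the row-major vectorisations of the basis matrices, so orthonormality
     reads W^H W = 1; since W is square this forces W W^H = 1, which is the claim. *)
  define N where "N = n * n"
  have N: "n\<^sup>2 = N"
    unfolding N_def by (simp add: power2_eq_square)
  define W where "W = mat N N (\<lambda>(r, i). As ! i $$ (r div n, r mod n))"
  define W' where "W' = mat N N (\<lambda>(i, r). cnj (W $$ (r, i)))"
  have carrier: "W \<in> carrier_mat N N" "W' \<in> carrier_mat N N"
    unfolding W_def W'_def by auto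
  have "W' * W = 1\<^sub>m N"
  proof (rule eq_matI)
    fix i j assume "i < dim_row (1\<^sub>m N)" "j < dim_col (1\<^sub>m N)"
    then have ij: "i < n\<^sup>2" "j < n\<^sup>2"
      unfolding N by auto
    have "mtrace (As ! i * As ! j)
        = (\<Sum>r<N. As ! i $$ (r div n, r mod n) * cnj (As ! j $$ (r div n, r mod n)))"
      unfolding N_def using herm_onb_hermitian[OF onb] ij
      by (intro mtrace_mult_hermitian_vec hermitian_mat_carrier) auto
    then have "(W' * W) $$ (i,j) = cnj (mtrace (As ! i * As ! j))"
      using ij carrier unfolding N by (simp add: scalar_prod_def lessThan_atLeast0 W'_def W_def)
    also have "\<dots> = 1\<^sub>m N $$ (i,j)"
      using herm_onb_orthonormal[OF onb ij] ij unfolding N by simp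
    finally show "(W' * W) $$ (i,j) = 1\<^sub>m N $$ (i,j)" .
  qed (simp_all add: W_def W'_def)
  then have "W * W' = 1\<^sub>m N"
    by (rule mat_mult_left_right_inverse[OF carrier(2,1)])
  then have "(W * W') $$ (r,s) = (if r = s then 1 else 0)"
    using assms(2,3) unfolding N_def by simp
  then show ?thesis
    using assms(2,3) carrier unfolding N N_def[symmetric]
    by (simp add: scalar_prod_def lessThan_atLeast0 W'_def W_def)
qed

definition herm_coords :: "complex mat list \<Rightarrow> complex mat \<Rightarrow> nat \<Rightarrow> real" where
  "herm_coords Bs X i = Re (mtrace (X * Bs ! i))"

lemma herm_onb_parseval:
  assumes onb: "herm_onb n As" and X: "hermitian_mat n X" and Y: "hermitian_mat n Y"
  shows "(\<Sum>i<n\<^sup>2. herm_coords As X i * herm_coords As Y i) = Re (mtrace (X * Y))"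
proof -
  define vec where "vec M r = M $$ (r div n, r mod n)" for M :: "complex mat" and r
  have carrier: "X \<in> carrier_mat n n" "Y \<in> carrier_mat n n"
    using X Y by (auto simp: hermitian_mat_carrier)
  have coords: "mtrace (Z * As ! i) = (\<Sum>r<n * n. vec Z r * cnj (vec (As ! i) r))"
    if "Z \<in> carrier_mat n n" "i < n\<^sup>2" for Z i
    unfolding vec_def using that onb by (simp add: mtrace_mult_hermitian_vec herm_onb_hermitian)
  have "(\<Sum>i<n\<^sup>2. herm_coords As X i * herm_coords As Y i)
      = Re (\<Sum>i<n\<^sup>2. mtrace (X * As ! i) * cnj (mtrace (Y * As ! i)))"
    using mtrace_mult_hermitian_real[OF Y herm_onb_hermitian[OF onb]]
    unfolding herm_coords_def by simp
  also have "(\<Sum>i<n\<^sup>2. mtrace (X * As ! i) * cnj (mtrace (Y * As ! i)))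
      = (\<Sum>r<n * n. \<Sum>s<n * n. vec X r * cnj (vec Y s)
           * cnj (\<Sum>i<n\<^sup>2. vec (As ! i) r * cnj (vec (As ! i) s)))"
    using carrier
    by (simp add: coords sum_product sum_distrib_left mult_ac sum.swap[where A = "{..<n\<^sup>2}"])
      (rule sum.swap)
  also have "\<dots> = (\<Sum>r<n * n. vec X r * cnj (vec Y r))"
    unfolding vec_def using onb by (simp add: herm_onb_completeness if_distrib cong: if_cong)
  also have "\<dots> = mtrace (X * Y)"
    unfolding vec_def by (rule mtrace_mult_hermitian_vec[OF carrier(1) Y, symmetric])
  finally show ?thesis .
qed

definition mixed_coords :: "nat \<Rightarrow> complex mat list \<Rightarrow> nat \<Rightarrow> real" where
  "mixed_coords n As i = herm_coords As (1\<^sub>m n) i / n"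

lemma mixed_coords_norm:
  assumes "herm_onb n As"
  shows "(\<Sum>i<n\<^sup>2. (mixed_coords n As i)\<^sup>2) = 1 / n"
proof -
  have "(\<Sum>i<n\<^sup>2. herm_coords As (1\<^sub>m n) i * herm_coords As (1\<^sub>m n) i) = n"
    using herm_onb_parseval[OF assms hermitian_one_mat hermitian_one_mat] by (simp add: mtrace_one_mat)
  then show ?thesis
    unfolding mixed_coords_def by (simp add: power_divide power2_eq_square flip: sum_divide_distrib)
qed

lemma state_centred_coords:
  assumes onb: "herm_onb n As" and P: "state n P"
  defines "e \<equiv> mixed_coords n As"
  shows "(\<Sum>i<n\<^sup>2. (herm_coords As P i - e i)\<^sup>2) \<le> 1 - 1 / n"
    and "(\<Sum>i<n\<^sup>2. (herm_coords As P i - e i) * e i) = 0"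
proof -
  let ?a = "herm_coords As P"
  have H: "hermitian_mat n P"
    using P by (rule state_hermitian)
  have ee: "(\<Sum>i<n\<^sup>2. (e i)\<^sup>2) = 1 / n"
    unfolding e_def by (rule mixed_coords_norm[OF onb])
  have "(\<Sum>i<n\<^sup>2. ?a i * ?a i) \<le> 1"
    using herm_onb_parseval[OF onb H H] state_purity[OF P] by simp
  then have aa: "(\<Sum>i<n\<^sup>2. (?a i)\<^sup>2) \<le> 1"
    by (simp add: power2_eq_square)
  have "(\<Sum>i<n\<^sup>2. ?a i * herm_coords As (1\<^sub>m n) i) = 1"
    using herm_onb_parseval[OF onb H hermitian_one_mat] state_mtrace[OF P] state_carrier[OF P] by simp
  then have ae: "(\<Sum>i<n\<^sup>2. ?a i * e i) = 1 / n"
    unfolding e_def mixed_coords_def by (simp flip: sum_divide_distrib)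
  have "(\<Sum>i<n\<^sup>2. (?a i - e i)\<^sup>2) = (\<Sum>i<n\<^sup>2. (?a i)\<^sup>2) - 2 * (\<Sum>i<n\<^sup>2. ?a i * e i) + (\<Sum>i<n\<^sup>2. (e i)\<^sup>2)"
    by (simp add: power2_diff sum.distrib sum_subtractf sum_distrib_left mult.assoc)
  then show "(\<Sum>i<n\<^sup>2. (?a i - e i)\<^sup>2) \<le> 1 - 1 / n"
    using aa ae ee by simp
  have "(\<Sum>i<n\<^sup>2. (?a i - e i) * e i) = (\<Sum>i<n\<^sup>2. ?a i * e i) - (\<Sum>i<n\<^sup>2. (e i)\<^sup>2)"
    by (simp add: left_diff_distrib sum_subtractf power2_eq_square)
  then show "(\<Sum>i<n\<^sup>2. (?a i - e i) * e i) = 0"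
    using ae ee by simp
qed

section \<open>Singular values\<close>

lemma real_orthogonal_cols:
  assumes "real_orthogonal n U" "k < n" "l < n"
  shows "(\<Sum>i<n. U $$ (i,k) * U $$ (i,l)) = (if k = l then 1 else 0)"
proof -
  have U: "U \<in> carrier_mat n n" "transpose_mat U * U = 1\<^sub>m n"
    using assms(1) unfolding real_orthogonal_def by auto
  have "(transpose_mat U * U) $$ (k,l) = (\<Sum>i<n. U $$ (i,k) * U $$ (i,l))"
    using U(1) assms(2,3) by (simp add: scalar_prod_def lessThan_atLeast0)
  then show ?thesis
    using U(2) assms(2,3) by simp
qed

lemma real_orthogonal_rows:
  assumes "real_orthogonal n U" "i < n" "j < n"
  shows "(\<Sum>k<n. U $$ (i,k) * U $$ (j,k)) = (if i = j then 1 else 0)"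
proof -
  have U: "U \<in> carrier_mat n n" "transpose_mat U * U = 1\<^sub>m n"
    using assms(1) unfolding real_orthogonal_def by auto
  then have "U * transpose_mat U = 1\<^sub>m n"
    by (intro mat_mult_left_right_inverse[OF _ U(1)]) simp_all
  moreover have "(U * transpose_mat U) $$ (i,j) = (\<Sum>k<n. U $$ (i,k) * U $$ (j,k))"
    using U(1) assms(2,3) by (simp add: scalar_prod_def lessThan_atLeast0)
  ultimately show ?thesis
    using assms(2,3) by simp
qed

lemma singular_values_entry:
  assumes "singular_values C \<sigma>" "C \<in> carrier_mat m n"
  obtains U V where "real_orthogonal m U" "real_orthogonal n V"
    "\<And>i j. i < m \<Longrightarrow> j < n \<Longrightarrow> C $$ (i,j) = (\<Sum>k<length \<sigma>. \<sigma> ! k * U $$ (i,k) * V $$ (j,k))"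
proof -
  define S where "S = mat m n (\<lambda>(i,j). if i = j then \<sigma> ! i else (0::real))"
  obtain U V where len: "length \<sigma> = min m n" and U: "real_orthogonal m U" and V: "real_orthogonal n V"
    and C: "C = U * S * transpose_mat V"
    using assms(1) unfolding singular_values_def S_def carrier_matD[OF assms(2)] by blast
  have carrier: "U \<in> carrier_mat m m" "V \<in> carrier_mat n n" "S \<in> carrier_mat m n"
    using U V unfolding real_orthogonal_def S_def by auto
  have "C $$ (i,j) = (\<Sum>k<length \<sigma>. \<sigma> ! k * U $$ (i,k) * V $$ (j,k))" if "i < m" "j < n" for i j
  proof -
    have "C $$ (i,j) = (\<Sum>k<m. U $$ (i,k) * (\<Sum>l<n. S $$ (k,l) * V $$ (j,l)))"
      unfolding C using that carrier by (simp add: scalar_prod_def lessThan_atLeast0)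
    also have "\<dots> = (\<Sum>k<m. if k < n then \<sigma> ! k * U $$ (i,k) * V $$ (j,k) else 0)"
      unfolding S_def by (intro sum.cong refl) (auto simp: if_distrib[of "\<lambda>x. x * _"] cong: if_cong)
    also have "\<dots> = (\<Sum>k\<in>{k\<in>{..<m}. k < n}. \<sigma> ! k * U $$ (i,k) * V $$ (j,k))"
      by (rule sum.inter_filter[symmetric]) simp
    also have "{k\<in>{..<m}. k < n} = {..<length \<sigma>}"
      using len by auto
    finally show ?thesis .
  qed
  then show ?thesis
    using that U V by blast
qed

lemma bilinear_form_rank_one_sum:
  fixes C :: "'i \<Rightarrow> 'j \<Rightarrow> 'a::comm_semiring_1"
  assumes "\<And>i j. i \<in> I \<Longrightarrow> j \<in> J \<Longrightarrow> C i j = (\<Sum>l\<in>L. w l * x l i * y l j)"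
  shows "(\<Sum>i\<in>I. \<Sum>j\<in>J. u i * C i j * v j) = (\<Sum>l\<in>L. w l * (\<Sum>i\<in>I. u i * x l i) * (\<Sum>j\<in>J. v j * y l j))"
proof -
  have "(\<Sum>i\<in>I. \<Sum>j\<in>J. u i * C i j * v j) = (\<Sum>i\<in>I. \<Sum>j\<in>J. \<Sum>l\<in>L. w l * (u i * x l i) * (v j * y l j))"
    using assms by (intro sum.cong refl) (simp add: sum_distrib_left sum_distrib_right mult_ac)
  also have "\<dots> = (\<Sum>l\<in>L. \<Sum>i\<in>I. \<Sum>j\<in>J. w l * (u i * x l i) * (v j * y l j))"
    by (simp add: sum.swap[where B = L])
  also have "\<dots> = (\<Sum>l\<in>L. w l * (\<Sum>i\<in>I. u i * x l i) * (\<Sum>j\<in>J. v j * y l j))"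
    by (simp add: sum_distrib_left sum_product mult_ac)
  finally show ?thesis .
qed

lemma real_orthogonal_bessel:
  assumes "real_orthogonal n U" "r \<le> n"
  shows "L2_set (\<lambda>k. \<Sum>i<n. x i * U $$ (i,k)) {..<r} \<le> L2_set x {..<n}"
  unfolding L2_set_def
proof (rule real_sqrt_le_mono)
  have "(\<Sum>k<r. (\<Sum>i<n. x i * U $$ (i,k))\<^sup>2) \<le> (\<Sum>k<n. (\<Sum>i<n. x i * U $$ (i,k))\<^sup>2)"
    using assms(2) by (intro sum_mono2) auto
  also have "\<dots> = (\<Sum>k<n. \<Sum>i<n. \<Sum>j<n. x i * x j * (U $$ (i,k) * U $$ (j,k)))"
    by (simp add: power2_eq_square sum_product mult_ac)
  also have "\<dots> = (\<Sum>i<n. \<Sum>k<n. \<Sum>j<n. x i * x j * (U $$ (i,k) * U $$ (j,k)))"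
    by (rule sum.swap)
  also have "\<dots> = (\<Sum>i<n. \<Sum>j<n. \<Sum>k<n. x i * x j * (U $$ (i,k) * U $$ (j,k)))"
    by (rule sum.cong[OF refl], rule sum.swap)
  also have "\<dots> = (\<Sum>i<n. \<Sum>j<n. x i * x j * (\<Sum>k<n. U $$ (i,k) * U $$ (j,k)))"
    by (simp add: sum_distrib_left)
  also have "\<dots> = (\<Sum>i<n. (x i)\<^sup>2)"
    using assms(1) by (simp add: real_orthogonal_rows power2_eq_square if_distrib cong: if_cong)
  finally show "(\<Sum>k<r. (\<Sum>i<n. x i * U $$ (i,k))\<^sup>2) \<le> (\<Sum>i<n. (x i)\<^sup>2)" .
qed

lemma real_orthogonal_rank_one_le:
  assumes "real_orthogonal m U" "real_orthogonal n V" "r \<le> m" "r \<le> n"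
  shows "(\<Sum>k<r. \<bar>\<Sum>i<m. x i * U $$ (i,k)\<bar> * \<bar>\<Sum>j<n. y j * V $$ (j,k)\<bar>)
           \<le> L2_set x {..<m} * L2_set y {..<n}"
  by (rule order_trans[OF L2_set_mult_ineq mult_mono[OF real_orthogonal_bessel real_orthogonal_bessel]])
    (use assms in auto)

lemma singular_values_props:
  assumes "singular_values C \<sigma>" "C \<in> carrier_mat m n"
  shows "length \<sigma> = min m n" "\<And>k. k < length \<sigma> \<Longrightarrow> 0 \<le> \<sigma> ! k"
    "\<And>k. k < length \<sigma> \<Longrightarrow> \<sigma> ! k \<le> \<sigma> ! 0"
proof -
  show "length \<sigma> = min m n" "\<And>k. k < length \<sigma> \<Longrightarrow> 0 \<le> \<sigma> ! k"
    using assms unfolding singular_values_def by auto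
  show "\<sigma> ! k \<le> \<sigma> ! 0" if "k < length \<sigma>" for k
    using assms(1) that unfolding singular_values_def
    by (cases k) (auto simp: sorted_wrt_iff_nth_less)
qed

lemma singular_values_nonneg: "singular_values C \<sigma> \<Longrightarrow> y \<in> set \<sigma> \<Longrightarrow> 0 \<le> y"
  unfolding singular_values_def in_set_conv_nth by blast

lemma singular_values_bilinear:
  assumes "singular_values C \<sigma>" "C \<in> carrier_mat m n"
  obtains U V where "real_orthogonal m U" "real_orthogonal n V"
    and "\<And>x y. (\<Sum>i<m. \<Sum>j<n. x i * C $$ (i,j) * y j)
       = (\<Sum>k<length \<sigma>. \<sigma> ! k * (\<Sum>i<m. x i * U $$ (i,k)) * (\<Sum>j<n. y j * V $$ (j,k)))"
proof -
  obtain U V where UV: "real_orthogonal m U" "real_orthogonal n V"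
    and C: "\<And>i j. i < m \<Longrightarrow> j < n \<Longrightarrow> C $$ (i,j) = (\<Sum>k<length \<sigma>. \<sigma> ! k * U $$ (i,k) * V $$ (j,k))"
    using singular_values_entry[OF assms] by blast
  have bilinear: "(\<Sum>i<m. \<Sum>j<n. x i * C $$ (i,j) * y j)
      = (\<Sum>k<length \<sigma>. \<sigma> ! k * (\<Sum>i<m. x i * U $$ (i,k)) * (\<Sum>j<n. y j * V $$ (j,k)))" for x y
    by (rule bilinear_form_rank_one_sum) (simp add: C)
  show ?thesis
    by (rule that[OF UV bilinear])
qed

lemma bilinear_le_first_singular_value:
  assumes "singular_values C \<sigma>" "C \<in> carrier_mat m n"
  shows "(\<Sum>i<m. \<Sum>j<n. x i * C $$ (i,j) * y j) \<le> \<sigma> ! 0 * (L2_set x {..<m} * L2_set y {..<n})"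
proof -
  obtain U V where UV: "real_orthogonal m U" "real_orthogonal n V"
    and bilinear: "\<And>x y. (\<Sum>i<m. \<Sum>j<n. x i * C $$ (i,j) * y j)
      = (\<Sum>k<length \<sigma>. \<sigma> ! k * (\<Sum>i<m. x i * U $$ (i,k)) * (\<Sum>j<n. y j * V $$ (j,k)))"
    using singular_values_bilinear[OF assms] by blast
  note \<sigma> = singular_values_props[OF assms]
  show ?thesis
  proof (cases "\<sigma> = []")
    case True
    then have "m = 0 \<or> n = 0"
      using \<sigma>(1) by auto
    then show ?thesis
      by auto
  next
    case False
    have "(\<Sum>i<m. \<Sum>j<n. x i * C $$ (i,j) * y j)
        \<le> (\<Sum>k<length \<sigma>. \<sigma> ! 0 * (\<bar>\<Sum>i<m. x i * U $$ (i,k)\<bar> * \<bar>\<Sum>j<n. y j * V $$ (j,k)\<bar>))"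
      unfolding bilinear
    proof (intro sum_mono)
      fix k assume "k \<in> {..<length \<sigma>}"
      then have "0 \<le> \<sigma> ! k" "\<sigma> ! k \<le> \<sigma> ! 0"
        using \<sigma> by auto
      then show "\<sigma> ! k * (\<Sum>i<m. x i * U $$ (i,k)) * (\<Sum>j<n. y j * V $$ (j,k))
          \<le> \<sigma> ! 0 * (\<bar>\<Sum>i<m. x i * U $$ (i,k)\<bar> * \<bar>\<Sum>j<n. y j * V $$ (j,k)\<bar>)"
        unfolding mult.assoc abs_mult[symmetric]
        by (rule order_trans[OF mult_left_mono[OF abs_ge_self] mult_right_mono]) auto
    qed
    also have "\<dots> \<le> \<sigma> ! 0 * (L2_set x {..<m} * L2_set y {..<n})"
    proof -
      have "0 \<le> \<sigma> ! 0"
        using \<sigma>(2)[of 0] False by simp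
      then show ?thesis
        unfolding sum_distrib_left[symmetric] using \<sigma>(1) UV
        by (intro mult_left_mono real_orthogonal_rank_one_le) auto
    qed
    finally show ?thesis .
  qed
qed

lemma sum_singular_values_le:
  assumes "singular_values C \<sigma>" "C \<in> carrier_mat m n"
    and C: "\<And>i j. i < m \<Longrightarrow> j < n \<Longrightarrow> C $$ (i,j) = x0 i * y0 j + (\<Sum>l\<in>L. w l * x l i * y l j)"
    and w: "\<forall>l\<in>L. 0 \<le> w l"
  shows "sum_list \<sigma> \<le> L2_set x0 {..<m} * L2_set y0 {..<n}
           + (\<Sum>l\<in>L. w l * (L2_set (x l) {..<m} * L2_set (y l) {..<n}))"
proof -
  obtain U V where UV: "real_orthogonal m U" "real_orthogonal n V"
    and bilinear: "\<And>x y. (\<Sum>i<m. \<Sum>j<n. x i * C $$ (i,j) * y j)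
      = (\<Sum>k<length \<sigma>. \<sigma> ! k * (\<Sum>i<m. x i * U $$ (i,k)) * (\<Sum>j<n. y j * V $$ (j,k)))"
    using singular_values_bilinear[OF assms(1,2)] by blast
  have len: "length \<sigma> \<le> m" "length \<sigma> \<le> n"
    using singular_values_props(1)[OF assms(1,2)] by auto
  have diag: "\<sigma> ! k = (\<Sum>i<m. \<Sum>j<n. U $$ (i,k) * C $$ (i,j) * V $$ (j,k))" if "k < length \<sigma>" for k
    unfolding bilinear using that len UV by (simp add: real_orthogonal_cols if_distrib cong: if_cong)
  define Ux where "Ux z k = (\<Sum>i<m. z i * U $$ (i,k))" for z k
  define Vy where "Vy z k = (\<Sum>j<n. z j * V $$ (j,k))" for z k
  have rank_one: "(\<Sum>k<length \<sigma>. Ux z k * Vy z' k) \<le> L2_set z {..<m} * L2_set z' {..<n}" for z z'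
  proof -
    have "(\<Sum>k<length \<sigma>. Ux z k * Vy z' k) \<le> (\<Sum>k<length \<sigma>. \<bar>Ux z k\<bar> * \<bar>Vy z' k\<bar>)"
      by (intro sum_mono) (simp flip: abs_mult)
    also have "\<dots> \<le> L2_set z {..<m} * L2_set z' {..<n}"
      unfolding Ux_def Vy_def by (rule real_orthogonal_rank_one_le[OF UV len])
    finally show ?thesis .
  qed
  have "\<sigma> ! k = Ux x0 k * Vy y0 k + (\<Sum>l\<in>L. w l * Ux (x l) k * Vy (y l) k)"
    if "k < length \<sigma>" for k
  proof -
    have "\<sigma> ! k = (\<Sum>i<m. \<Sum>j<n. U $$ (i,k) * (x0 i * y0 j) * V $$ (j,k))
        + (\<Sum>i<m. \<Sum>j<n. U $$ (i,k) * (\<Sum>l\<in>L. w l * x l i * y l j) * V $$ (j,k))"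
      using that by (simp add: diag C distrib_left distrib_right sum.distrib)
    also have "(\<Sum>i<m. \<Sum>j<n. U $$ (i,k) * (\<Sum>l\<in>L. w l * x l i * y l j) * V $$ (j,k))
        = (\<Sum>l\<in>L. w l * Ux (x l) k * Vy (y l) k)"
      unfolding Ux_def Vy_def
      by (subst bilinear_form_rank_one_sum[where C = "\<lambda>i j. \<Sum>l\<in>L. w l * x l i * y l j"
            and u = "\<lambda>i. U $$ (i,k)" and v = "\<lambda>j. V $$ (j,k)"]) (simp_all add: mult_ac)
    finally show ?thesis
      unfolding Ux_def Vy_def by (simp add: sum_product mult_ac)
  qed
  then have "sum_list \<sigma> = (\<Sum>k<length \<sigma>. Ux x0 k * Vy y0 k)
      + (\<Sum>k<length \<sigma>. \<Sum>l\<in>L. w l * Ux (x l) k * Vy (y l) k)"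
    by (simp add: sum_list_sum_nth atLeast0LessThan sum.distrib)
  also have "\<dots> = (\<Sum>k<length \<sigma>. Ux x0 k * Vy y0 k)
      + (\<Sum>l\<in>L. w l * (\<Sum>k<length \<sigma>. Ux (x l) k * Vy (y l) k))"
    by (simp only: sum_distrib_left mult.assoc sum.swap[of _ "{..<length \<sigma>}" L])
  also have "\<dots> \<le> L2_set x0 {..<m} * L2_set y0 {..<n}
      + (\<Sum>l\<in>L. w l * (L2_set (x l) {..<m} * L2_set (y l) {..<n}))"
    using w rank_one by (intro add_mono sum_mono mult_left_mono) auto
  finally show ?thesis .
qed

section \<open>Separable states in filter normal form\<close>

lemma mtrace_convex_product_mult_kron:
  fixes m :: nat
  assumes "\<forall>k<m. state dA (\<rho>A k) \<and> state dB (\<rho>B k)"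
    and "X \<in> carrier_mat dA dA" "Y \<in> carrier_mat dB dB"
  shows "mtrace (mat (dA * dB) (dA * dB) (\<lambda>ij. \<Sum>k<m. complex_of_real (p k) * kron (\<rho>A k) (\<rho>B k) $$ ij) * kron X Y)
      = (\<Sum>k<m. complex_of_real (p k) * (mtrace (\<rho>A k * X) * mtrace (\<rho>B k * Y)))"
proof -
  have kron_carrier: "kron (\<rho>A k) (\<rho>B k) \<in> carrier_mat (dA * dB) (dA * dB)" if "k < m" for k
    using assms(1) that by (simp add: kron_carrier_mat state_carrier)
  have "mtrace (mat (dA * dB) (dA * dB) (\<lambda>ij. \<Sum>k<m. complex_of_real (p k) * kron (\<rho>A k) (\<rho>B k) $$ ij) * kron X Y)
      = (\<Sum>k<m. complex_of_real (p k) * mtrace (kron (\<rho>A k) (\<rho>B k) * kron X Y))"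
    by (rule mtrace_mat_sum_mult[OF kron_carrier kron_carrier_mat[OF assms(2,3)]])
  also have "\<dots> = (\<Sum>k<m. complex_of_real (p k) * (mtrace (\<rho>A k * X) * mtrace (\<rho>B k * Y)))"
  proof (intro sum.cong refl)
    fix k assume "k \<in> {..<m}"
    then have "state dA (\<rho>A k)" "state dB (\<rho>B k)"
      using assms(1) by auto
    then show "complex_of_real (p k) * mtrace (kron (\<rho>A k) (\<rho>B k) * kron X Y)
        = complex_of_real (p k) * (mtrace (\<rho>A k * X) * mtrace (\<rho>B k * Y))"
      by (simp add: mtrace_kron_mult[OF state_carrier assms(2) state_carrier assms(3)])
  qed
  finally show ?thesis .
qed

lemma FNF_convex_product_marginal_left:
  fixes m :: nat
  assumes \<rho>: "\<rho> = mat (dA * dB) (dA * dB) (\<lambda>ij. \<Sum>k<m. complex_of_real (p k) * kron (\<rho>A k) (\<rho>B k) $$ ij)"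
    and states: "\<forall>k<m. state dA (\<rho>A k) \<and> state dB (\<rho>B k)" and p: "(\<Sum>k<m. p k) = 1"
    and "FNF dA dB \<rho>" "herm_onb dA As" "i < dA\<^sup>2" "0 < dA"
  shows "(\<Sum>k<m. p k * herm_coords As (\<rho>A k) i) = mixed_coords dA As i"
proof -
  define X c where "X = As ! i" and "c = Re (mtrace X) / dA"
  define X0 where "X0 = X - complex_of_real c \<cdot>\<^sub>m 1\<^sub>m dA"
  have X: "hermitian_mat dA X"
    unfolding X_def using assms(5,6) by (rule herm_onb_hermitian)
  note X0 = hermitian_traceless_part[OF X assms(7), folded c_def X0_def]
  have "0 = mtrace (\<rho> * kron X0 (1\<^sub>m dB))"
    using assms(4) X0(1,2) unfolding FNF_def by simp
  also have "\<dots> = (\<Sum>k<m. complex_of_real (p k) * (mtrace (\<rho>A k * X) - complex_of_real c))"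
    unfolding \<rho> mtrace_convex_product_mult_kron[OF states hermitian_mat_carrier[OF X0(1)] one_carrier_mat]
    using states by (intro sum.cong refl) (simp add: X0(3) state_mtrace_mult_one)
  finally have "0 = Re (\<Sum>k<m. complex_of_real (p k) * (mtrace (\<rho>A k * X) - complex_of_real c))"
    by simp
  also have "\<dots> = (\<Sum>k<m. p k * herm_coords As (\<rho>A k) i) - c"
    using p unfolding herm_coords_def X_def
    by (simp add: Re_sum right_diff_distrib sum_subtractf flip: sum_distrib_right)
  moreover have "c = mixed_coords dA As i"
    unfolding c_def mixed_coords_def herm_coords_def X_def using hermitian_mat_carrier[OF X] X_def by simp
  ultimately show ?thesis
    by simp
qed

lemma FNF_convex_product_marginal_right:
  fixes m :: nat
  assumes \<rho>: "\<rho> = mat (dA * dB) (dA * dB) (\<lambda>ij. \<Sum>k<m. complex_of_real (p k) * kron (\<rho>A k) (\<rho>B k) $$ ij)"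
    and states: "\<forall>k<m. state dA (\<rho>A k) \<and> state dB (\<rho>B k)" and p: "(\<Sum>k<m. p k) = 1"
    and "FNF dA dB \<rho>" "herm_onb dB Bs" "j < dB\<^sup>2" "0 < dB"
  shows "(\<Sum>k<m. p k * herm_coords Bs (\<rho>B k) j) = mixed_coords dB Bs j"
proof -
  define X c where "X = Bs ! j" and "c = Re (mtrace X) / dB"
  define X0 where "X0 = X - complex_of_real c \<cdot>\<^sub>m 1\<^sub>m dB"
  have X: "hermitian_mat dB X"
    unfolding X_def using assms(5,6) by (rule herm_onb_hermitian)
  note X0 = hermitian_traceless_part[OF X assms(7), folded c_def X0_def]
  have "0 = mtrace (\<rho> * kron (1\<^sub>m dA) X0)"
    using assms(4) X0(1,2) unfolding FNF_def by simp
  also have "\<dots> = (\<Sum>k<m. complex_of_real (p k) * (mtrace (\<rho>B k * X) - complex_of_real c))"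
    unfolding \<rho> mtrace_convex_product_mult_kron[OF states one_carrier_mat hermitian_mat_carrier[OF X0(1)]]
    using states by (intro sum.cong refl) (simp add: X0(3) state_mtrace_mult_one)
  finally have "0 = Re (\<Sum>k<m. complex_of_real (p k) * (mtrace (\<rho>B k * X) - complex_of_real c))"
    by simp
  also have "\<dots> = (\<Sum>k<m. p k * herm_coords Bs (\<rho>B k) j) - c"
    using p unfolding herm_coords_def X_def
    by (simp add: Re_sum right_diff_distrib sum_subtractf flip: sum_distrib_right)
  moreover have "c = mixed_coords dB Bs j"
    unfolding c_def mixed_coords_def herm_coords_def X_def using hermitian_mat_carrier[OF X] X_def by simp
  ultimately show ?thesis
    by simp
qed

lemma corr_mat_convex_product:
  fixes m :: nat
  assumes \<rho>: "\<rho> = mat (dA * dB) (dA * dB) (\<lambda>ij. \<Sum>k<m. complex_of_real (p k) * kron (\<rho>A k) (\<rho>B k) $$ ij)"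
    and states: "\<forall>k<m. state dA (\<rho>A k) \<and> state dB (\<rho>B k)"
    and "herm_onb dA As" "herm_onb dB Bs" "i < dA\<^sup>2" "j < dB\<^sup>2"
  shows "corr_mat \<rho> As Bs $$ (i,j) = (\<Sum>k<m. p k * (herm_coords As (\<rho>A k) i * herm_coords Bs (\<rho>B k) j))"
proof -
  have A: "hermitian_mat dA (As ! i)" and B: "hermitian_mat dB (Bs ! j)"
    using assms(3-6) by (auto intro: herm_onb_hermitian)
  have "length As = dA\<^sup>2" "length Bs = dB\<^sup>2"
    using assms(3,4) unfolding herm_onb_def by auto
  then have "corr_mat \<rho> As Bs $$ (i,j) = Re (mtrace (\<rho> * kron (As ! i) (Bs ! j)))"
    unfolding corr_mat_def using assms(5,6) by simp
  also have "\<dots> = Re (\<Sum>k<m. complex_of_real (p k) * (mtrace (\<rho>A k * As ! i) * mtrace (\<rho>B k * Bs ! j)))"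
    unfolding \<rho> by (simp add: mtrace_convex_product_mult_kron[OF states] hermitian_mat_carrier A B)
  also have "\<dots> = (\<Sum>k<m. p k * (herm_coords As (\<rho>A k) i * herm_coords Bs (\<rho>B k) j))"
    unfolding Re_sum herm_coords_def
  proof (intro sum.cong refl)
    fix k assume "k \<in> {..<m}"
    then have "Im (mtrace (\<rho>A k * As ! i)) = 0" "Im (mtrace (\<rho>B k * Bs ! j)) = 0"
      using states A B by (auto intro: mtrace_mult_hermitian_real state_hermitian)
    then show "Re (complex_of_real (p k) * (mtrace (\<rho>A k * As ! i) * mtrace (\<rho>B k * Bs ! j)))
        = p k * (Re (mtrace (\<rho>A k * As ! i)) * Re (mtrace (\<rho>B k * Bs ! j)))"
      by simp
  qed
  finally show ?thesis .
qed

lemma FNF_convex_product_corr_mat: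
  fixes m :: nat
  assumes \<rho>: "\<rho> = mat (dA * dB) (dA * dB) (\<lambda>ij. \<Sum>k<m. complex_of_real (p k) * kron (\<rho>A k) (\<rho>B k) $$ ij)"
    and states: "\<forall>k<m. state dA (\<rho>A k) \<and> state dB (\<rho>B k)" and p: "(\<Sum>k<m. p k) = 1"
    and "FNF dA dB \<rho>" "herm_onb dA As" "herm_onb dB Bs" "0 < dA" "0 < dB" "i < dA\<^sup>2" "j < dB\<^sup>2"
  defines "a \<equiv> \<lambda>k. herm_coords As (\<rho>A k) i - mixed_coords dA As i"
    and "b \<equiv> \<lambda>k. herm_coords Bs (\<rho>B k) j - mixed_coords dB Bs j"
  shows "corr_mat \<rho> As Bs $$ (i,j) = mixed_coords dA As i * mixed_coords dB Bs j + (\<Sum>k<m. p k * a k * b k)"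
proof -
  have mean_a: "(\<Sum>k<m. p k * a k) = 0"
    using FNF_convex_product_marginal_left[OF \<rho> states p assms(4,5,9,7)] p
    unfolding a_def by (simp add: right_diff_distrib sum_subtractf flip: sum_distrib_right)
  have mean_b: "(\<Sum>k<m. p k * b k) = 0"
    using FNF_convex_product_marginal_right[OF \<rho> states p assms(4,6,10,8)] p
    unfolding b_def by (simp add: right_diff_distrib sum_subtractf flip: sum_distrib_right)
  have "corr_mat \<rho> As Bs $$ (i,j)
      = (\<Sum>k<m. p k * ((a k + mixed_coords dA As i) * (b k + mixed_coords dB Bs j)))"
    unfolding corr_mat_convex_product[OF \<rho> states assms(5,6,9,10)] a_def b_def by simp
  also have "\<dots> = (\<Sum>k<m. p k * a k * b k) + mixed_coords dA As i * (\<Sum>k<m. p k * b k)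
      + mixed_coords dB Bs j * (\<Sum>k<m. p k * a k) + mixed_coords dA As i * mixed_coords dB Bs j * (\<Sum>k<m. p k)"
    by (simp add: algebra_simps sum.distrib sum_distrib_left sum_distrib_right)
  finally show ?thesis
    using mean_a mean_b p by simp
qed

lemma corr_mat_carrier:
  "herm_onb dA As \<Longrightarrow> herm_onb dB Bs \<Longrightarrow> corr_mat \<rho> As Bs \<in> carrier_mat (dA\<^sup>2) (dB\<^sup>2)"
  unfolding corr_mat_def herm_onb_def by simp

lemma corr_mat_singular_values_length:
  assumes "herm_onb dA As" "herm_onb dB Bs" "singular_values (corr_mat \<rho> As Bs) \<sigma>"
  shows "length \<sigma> = (min dA dB)\<^sup>2"
  using singular_values_props(1)[OF assms(3) corr_mat_carrier[OF assms(1,2)]]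
  by (simp add: min_def power_mono)

lemma separable_FNF_corr_mat_decomposition:
  assumes "separable dA dB \<rho>" "FNF dA dB \<rho>" "herm_onb dA As" "herm_onb dB Bs" "0 < dA" "0 < dB"
  obtains m :: nat and p a b where "\<forall>k<m. 0 \<le> p k" "(\<Sum>k<m. p k) = 1"
    and "\<And>i j. i < dA\<^sup>2 \<Longrightarrow> j < dB\<^sup>2 \<Longrightarrow>
      corr_mat \<rho> As Bs $$ (i,j) = mixed_coords dA As i * mixed_coords dB Bs j + (\<Sum>k<m. p k * a k i * b k j)"
    and "\<And>k. k < m \<Longrightarrow> L2_set (a k) {..<dA\<^sup>2} \<le> sqrt (1 - 1 / dA)"
    and "\<And>k. k < m \<Longrightarrow> L2_set (b k) {..<dB\<^sup>2} \<le> sqrt (1 - 1 / dB)"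
    and "\<And>k. k < m \<Longrightarrow> (\<Sum>i<dA\<^sup>2. a k i * mixed_coords dA As i) = 0"
    and "\<And>k. k < m \<Longrightarrow> (\<Sum>j<dB\<^sup>2. b k j * mixed_coords dB Bs j) = 0"
proof -
  obtain m :: nat and p \<rho>A \<rho>B where sep: "\<forall>k<m. 0 \<le> p k \<and> state dA (\<rho>A k) \<and> state dB (\<rho>B k)"
    and p: "(\<Sum>k<m. p k) = 1"
    and \<rho>: "\<rho> = mat (dA * dB) (dA * dB) (\<lambda>ij. \<Sum>k<m. complex_of_real (p k) * kron (\<rho>A k) (\<rho>B k) $$ ij)"
    using assms(1) unfolding separable_def by blast
  have states: "\<forall>k<m. state dA (\<rho>A k) \<and> state dB (\<rho>B k)"
    using sep by blast
  define a where "a k i = herm_coords As (\<rho>A k) i - mixed_coords dA As i" for k i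
  define b where "b k j = herm_coords Bs (\<rho>B k) j - mixed_coords dB Bs j" for k j
  show thesis
  proof (rule that)
    show "corr_mat \<rho> As Bs $$ (i,j) = mixed_coords dA As i * mixed_coords dB Bs j + (\<Sum>k<m. p k * a k i * b k j)"
      if "i < dA\<^sup>2" "j < dB\<^sup>2" for i j
      using FNF_convex_product_corr_mat[OF \<rho> states p assms(2-6) that]
      unfolding a_def b_def by (simp add: mult.assoc)
    show "L2_set (a k) {..<dA\<^sup>2} \<le> sqrt (1 - 1 / dA)" "L2_set (b k) {..<dB\<^sup>2} \<le> sqrt (1 - 1 / dB)"
      "(\<Sum>i<dA\<^sup>2. a k i * mixed_coords dA As i) = 0" "(\<Sum>j<dB\<^sup>2. b k j * mixed_coords dB Bs j) = 0"
      if "k < m" for k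
      using states that state_centred_coords[OF assms(3)] state_centred_coords[OF assms(4)]
      unfolding a_def b_def L2_set_def by auto
  qed (use sep p in auto)
qed

lemma mixed_coords_L2_set:
  "herm_onb dA As \<Longrightarrow> herm_onb dB Bs \<Longrightarrow>
    L2_set (mixed_coords dA As) {..<dA\<^sup>2} * L2_set (mixed_coords dB Bs) {..<dB\<^sup>2} = 1 / sqrt (real dA * real dB)"
  unfolding L2_set_def by (simp add: mixed_coords_norm real_sqrt_divide real_sqrt_mult)

lemma separable_FNF_first_singular_value:
  assumes "separable dA dB \<rho>" "FNF dA dB \<rho>" "herm_onb dA As" "herm_onb dB Bs"
    and \<sigma>: "singular_values (corr_mat \<rho> As Bs) \<sigma>" and "0 < dA" "0 < dB"
  shows "1 / sqrt (real dA * real dB) \<le> \<sigma> ! 0"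
proof -
  obtain m :: nat and p a b where decomposition: "\<And>i j. i < dA\<^sup>2 \<Longrightarrow> j < dB\<^sup>2 \<Longrightarrow>
      corr_mat \<rho> As Bs $$ (i,j) = mixed_coords dA As i * mixed_coords dB Bs j + (\<Sum>k<m. p k * a k i * b k j)"
    and centred: "\<And>k. k < m \<Longrightarrow> (\<Sum>i<dA\<^sup>2. a k i * mixed_coords dA As i) = 0"
      "\<And>k. k < m \<Longrightarrow> (\<Sum>j<dB\<^sup>2. b k j * mixed_coords dB Bs j) = 0"
    by (rule separable_FNF_corr_mat_decomposition[OF assms(1-4,6,7)]) (rule that)
  define e f where "e = mixed_coords dA As" and "f = mixed_coords dB Bs"
  have "1 / dA * (1 / dB) = (\<Sum>i<dA\<^sup>2. \<Sum>j<dB\<^sup>2. e i * corr_mat \<rho> As Bs $$ (i,j) * f j)"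
  proof -
    have "(\<Sum>i<dA\<^sup>2. \<Sum>j<dB\<^sup>2. e i * corr_mat \<rho> As Bs $$ (i,j) * f j)
        = (\<Sum>i<dA\<^sup>2. \<Sum>j<dB\<^sup>2. e i * (e i * f j) * f j)
          + (\<Sum>i<dA\<^sup>2. \<Sum>j<dB\<^sup>2. e i * (\<Sum>k<m. p k * a k i * b k j) * f j)"
      unfolding e_def f_def by (simp add: decomposition distrib_left distrib_right sum.distrib)
    also have "(\<Sum>i<dA\<^sup>2. \<Sum>j<dB\<^sup>2. e i * (\<Sum>k<m. p k * a k i * b k j) * f j)
        = (\<Sum>k<m. p k * (\<Sum>i<dA\<^sup>2. e i * a k i) * (\<Sum>j<dB\<^sup>2. f j * b k j))"
      by (rule bilinear_form_rank_one_sum) simp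
    also have "\<dots> = 0"
      using centred unfolding e_def f_def by (simp add: mult.commute)
    also have "(\<Sum>i<dA\<^sup>2. \<Sum>j<dB\<^sup>2. e i * (e i * f j) * f j) = (\<Sum>i<dA\<^sup>2. (e i)\<^sup>2) * (\<Sum>j<dB\<^sup>2. (f j)\<^sup>2)"
      by (simp add: sum_product power2_eq_square mult_ac)
    finally show ?thesis
      using assms(3,4) unfolding e_def f_def by (simp add: mixed_coords_norm)
  qed
  also have "\<dots> \<le> \<sigma> ! 0 * (1 / sqrt (real dA * real dB))"
    using bilinear_le_first_singular_value[OF \<sigma> corr_mat_carrier[OF assms(3,4)], of e f]
    unfolding e_def f_def mixed_coords_L2_set[OF assms(3,4)] .
  finally have "(1 / sqrt (real dA * real dB)) * (1 / sqrt (real dA * real dB)) \<le> \<sigma> ! 0 * (1 / sqrt (real dA * real dB))"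
    using assms(6,7) by simp
  then show ?thesis
    by (rule mult_right_le_imp_le) (use assms(6,7) in simp)
qed

lemma separable_FNF_sum_singular_values:
  assumes "separable dA dB \<rho>" "FNF dA dB \<rho>" "herm_onb dA As" "herm_onb dB Bs"
    and \<sigma>: "singular_values (corr_mat \<rho> As Bs) \<sigma>" and "0 < dA" "0 < dB"
  shows "sum_list \<sigma> \<le> 1 / sqrt (real dA * real dB) + sqrt ((1 - 1 / dA) * (1 - 1 / dB))"
proof -
  obtain m :: nat and p a b where p: "\<forall>k<m. 0 \<le> p k" "(\<Sum>k<m. p k) = 1"
    and decomposition: "\<And>i j. i < dA\<^sup>2 \<Longrightarrow> j < dB\<^sup>2 \<Longrightarrow>
      corr_mat \<rho> As Bs $$ (i,j) = mixed_coords dA As i * mixed_coords dB Bs j + (\<Sum>k<m. p k * a k i * b k j)"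
    and centred: "\<And>k. k < m \<Longrightarrow> L2_set (a k) {..<dA\<^sup>2} \<le> sqrt (1 - 1 / dA)"
      "\<And>k. k < m \<Longrightarrow> L2_set (b k) {..<dB\<^sup>2} \<le> sqrt (1 - 1 / dB)"
    by (rule separable_FNF_corr_mat_decomposition[OF assms(1-4,6,7)]) (rule that)
  have "sum_list \<sigma> \<le> 1 / sqrt (real dA * real dB)
      + (\<Sum>k<m. p k * (L2_set (a k) {..<dA\<^sup>2} * L2_set (b k) {..<dB\<^sup>2}))"
    using sum_singular_values_le[OF \<sigma> corr_mat_carrier[OF assms(3,4)] decomposition] p
    unfolding mixed_coords_L2_set[OF assms(3,4)] by auto
  also have "\<dots> \<le> 1 / sqrt (real dA * real dB) + (\<Sum>k<m. p k * (sqrt (1 - 1 / dA) * sqrt (1 - 1 / dB)))"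
  proof -
    have "1 / dA \<le> 1" "1 / dB \<le> 1"
      using assms(6,7) by auto
    then show ?thesis
      using p centred by (intro add_left_mono sum_mono mult_left_mono mult_mono) auto
  qed
  also have "\<dots> = 1 / sqrt (real dA * real dB) + sqrt ((1 - 1 / dA) * (1 - 1 / dB))"
    using p by (simp add: real_sqrt_mult flip: sum_distrib_right)
  finally show ?thesis .
qed

section \<open>The bound on the correlation minor norm\<close>

lemma beta_bounds:
  fixes D d :: real
  assumes "1 < d" "1 \<le> D" "D \<le> d ^ 3"
  defines "\<beta> \<equiv> sqrt ((D - 1) / (D * (d\<^sup>2 - 1)) * ((d - 1) / (d * (d\<^sup>2 - 1))))"
  shows "(d\<^sup>2 - 1) * \<beta> = sqrt ((1 - 1 / D) * (1 - 1 / d))"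
    and "0 \<le> \<beta>"
    and "\<beta> \<le> 1 / sqrt (D * d)"
proof -
  have q: "0 < d\<^sup>2 - 1"
    using one_less_power[OF assms(1), of 2] by simp
  have "(d\<^sup>2 - 1) * \<beta> = sqrt ((d\<^sup>2 - 1)\<^sup>2 * ((D - 1) / (D * (d\<^sup>2 - 1)) * ((d - 1) / (d * (d\<^sup>2 - 1)))))"
    unfolding \<beta>_def real_sqrt_mult using q by simp
  also have "(d\<^sup>2 - 1)\<^sup>2 * ((D - 1) / (D * (d\<^sup>2 - 1)) * ((d - 1) / (d * (d\<^sup>2 - 1)))) = (D - 1) / D * ((d - 1) / d)"
    using q by (simp add: power2_eq_square)
  also have "\<dots> = (1 - 1 / D) * (1 - 1 / d)"
    using assms(1,2) by (simp add: diff_divide_distrib)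
  finally show "(d\<^sup>2 - 1) * \<beta> = sqrt ((1 - 1 / D) * (1 - 1 / d))" .
  show "0 \<le> \<beta>"
    unfolding \<beta>_def using assms(1,2) q by simp
  have "d \<le> d\<^sup>2"
    using assms(1) by (simp add: power2_eq_square)
  moreover have "(d - 1) * (d + 1)\<^sup>2 = d ^ 3 + d\<^sup>2 - d - 1"
    by (simp add: power2_eq_square power3_eq_cube algebra_simps)
  ultimately have "D - 1 \<le> (d - 1) * (d + 1)\<^sup>2"
    using assms(3) by linarith
  then have "(D - 1) * (d - 1) \<le> (d - 1) * (d + 1)\<^sup>2 * (d - 1)"
    using assms(1) by (intro mult_right_mono) auto
  also have "\<dots> = (d\<^sup>2 - 1)\<^sup>2"
    by (simp add: power2_eq_square algebra_simps)
  finally have key: "(D - 1) * (d - 1) \<le> (d\<^sup>2 - 1)\<^sup>2" .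
  have "(D - 1) / (D * (d\<^sup>2 - 1)) * ((d - 1) / (d * (d\<^sup>2 - 1))) = (D - 1) * (d - 1) / ((D * d) * (d\<^sup>2 - 1)\<^sup>2)"
    by (simp add: power2_eq_square)
  also have "\<dots> \<le> (d\<^sup>2 - 1)\<^sup>2 / ((D * d) * (d\<^sup>2 - 1)\<^sup>2)"
    using key q assms(1,2) by (intro divide_right_mono) auto
  also have "\<dots> = 1 / (D * d)"
    using q by (intro nonzero_divide_mult_cancel_right) simp
  finally have "\<beta> \<le> sqrt (1 / (D * d))"
    unfolding \<beta>_def by (rule real_sqrt_le_mono)
  then show "\<beta> \<le> 1 / sqrt (D * d)"
    by (simp add: real_sqrt_divide)
qed

lemma CMN_1_eq_esym:
  fixes \<sigma> :: "real list"
  assumes "\<forall>y\<in>set \<sigma>. 0 \<le> y"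
  shows "CMN h 1 \<sigma> = esym h \<sigma>"
proof -
  have "esym h \<sigma> \<ge> 0"
    unfolding esym_def using assms by (intro sum_nonneg prod_nonneg) auto
  moreover have "(\<Sum>R\<in>{R. R \<subseteq> {..<length \<sigma>} \<and> card R = h}. \<Prod>k\<in>R. \<sigma> ! k powr 1) = esym h \<sigma>"
    unfolding esym_def using assms by (intro sum.cong refl prod.cong) auto
  ultimately show ?thesis
    unfolding CMN_def by simp
qed

lemma CMN_1_le_esym_replicate:
  fixes \<sigma> :: "real list" and \<alpha> \<beta> :: real
  assumes "\<forall>y\<in>set \<sigma>. 0 \<le> y" "\<sigma> \<noteq> []" "\<alpha> \<le> \<sigma> ! 0" "\<beta> \<le> \<alpha>" "0 \<le> \<beta>"
    and "sum_list \<sigma> \<le> \<alpha> + (length \<sigma> - 1) * \<beta>"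
  shows "CMN h 1 \<sigma> \<le> esym h (\<alpha> # replicate (length \<sigma> - 1) \<beta>)"
proof -
  obtain x ys where \<sigma>: "\<sigma> = x # ys"
    using assms(2) by (cases \<sigma>) auto
  show ?thesis
    using esym_Cons_le_esym_Cons_replicate[of ys \<alpha> x \<beta> h] CMN_1_eq_esym[OF assms(1)] assms
    unfolding \<sigma> by simp
qed

theorem theorem1:
  fixes dA dB h :: nat and \<rho> :: "complex mat" and As Bs :: "complex mat list" and \<sigma> :: "real list"
  defines "d \<equiv> min dA dB" and "D \<equiv> max dA dB"
  assumes "D \<le> d^3" and "1 < h" and "h \<le> d^2"
    and "state (dA*dB) \<rho>" and "separable dA dB \<rho>" and "FNF dA dB \<rho>"
    and "herm_onb dA As" and "herm_onb dB Bs"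
    and "singular_values (corr_mat \<rho> As Bs) \<sigma>"
  shows "CMN h 1 \<sigma> \<le> esym h (1 / sqrt (real (D*d)) #
           replicate (d^2 - 1) (sqrt ((real D - 1) / (real D * (real d^2 - 1)) *
                                      ((real d - 1) / (real d * (real d^2 - 1))))))"
proof -
  have "1 < d"
    using assms(4,5) power_le_one[of d 2] by (cases "d \<le> 1") auto
  then have dims: "0 < dA" "0 < dB" "1 < real d" "1 \<le> real D" "real D \<le> real d ^ 3"
    using assms(3) unfolding d_def D_def by (auto simp flip: of_nat_power)
  have DdAB: "real D * real d = real dA * real dB"
    and "(1 - 1 / real D) * (1 - 1 / real d) = (1 - 1 / real dA) * (1 - 1 / real dB)"
    unfolding D_def d_def by (cases "dA \<le> dB"; simp add: max_def min_def)+
  note bounds = separable_FNF_first_singular_value[OF assms(7-11) dims(1,2), folded DdAB]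
    separable_FNF_sum_singular_values[OF assms(7-11) dims(1,2), folded DdAB this]
  note beta = beta_bounds[OF dims(3-5)]
  have len: "length \<sigma> = d\<^sup>2"
    unfolding d_def by (rule corr_mat_singular_values_length[OF assms(9-11)])
  show ?thesis
    unfolding len[symmetric]
  proof (rule CMN_1_le_esym_replicate)
    show "\<forall>y\<in>set \<sigma>. 0 \<le> y" "\<sigma> \<noteq> []"
      using singular_values_nonneg[OF assms(11)] len \<open>1 < d\<close> by auto
    show "1 / sqrt (real (D * d)) \<le> \<sigma> ! 0"
      using bounds(1) by simp
    show "sum_list \<sigma> \<le> 1 / sqrt (real (D * d)) + real (length \<sigma> - 1) * sqrt ((real D - 1)
        / (real D * ((real d)\<^sup>2 - 1)) * ((real d - 1) / (real d * ((real d)\<^sup>2 - 1))))"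
      using bounds(2) beta(1) \<open>1 < d\<close> unfolding len by (simp add: of_nat_diff)
  qed (use beta(2,3) in \<open>simp_all add: real_sqrt_mult mult.commute\<close>)
qed

end
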